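(* For $Y\in\mathfrak o(V,K)$ and $y\in V$ let $\mu_{Y,y}\in\mathfrak g^*$ be the functional $Z\mapsto\langle (Y,y^* )\,|\,Z\rangle$ on $\mathfrak g$. Then the assignment $(Y,y)\mapsto\mu_{Y,y}$ induces a well-defined bijection from the set of special cotypes (equivalence classes of special tuples) onto the set of coadjoint orbits of $G$ in $\mathfrak g^*$; that is: every element of $\mathfrak g^*$ is of the form $\mu_{Y,y}$, and two special tuples $(Y,y)$, $(Y',y')$ are equivalent if and only if $\mu_{Y,y}$ and $\mu_{Y',y'}$ lie in the same $G$-coadjoint orbit, where $G$ acts on $\mathfrak g^*$ by $(g\cdot\mu)(Z)=\mu(g^{-1}Zg)$.
   Context: Let $n\ge 0$ be an integer and let $\widetilde K$ be a real symmetric $n\times n$ matrix with $\widetilde K^2=I_n$. Let $V=\mathbb R^{n+2}$ with standard basis $e_1,\dots,e_{n+2}$, and let $K=\begin{pmatrix}0&0&1\\0&\widetilde K&0\\1&0&0\end{pmatrix}$ (block sizes $1,n,1$). For $x,w\in V$ write $x^*=x^TK$ (a row vector) and $L_{u,w}=u\,w^*-w\,u^*$. Let $O(V,K)=\{P:P^TKP=K\}$, $\mathfrak o(V,K)=\{X:X^TK+KX=0\}$, and $O(V,K)_{e_{n+2}}=\{P\in O(V,K):Pe_{n+2}=e_{n+2}\}$. Let $\mathfrak g^\vee$ be the space of $(n+3)\times(n+3)$ matrices $(X,x^* ):=\begin{pmatrix}0&x^*\\0&X\end{pmatrix}$ with $X\in\mathfrak o(V,K)$, $x\in V$, with bilinear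 form $\langle (X,x^* )\,|\,(\overline X,\overline x^{\,*})\rangle=\tfrac12\mathrm{tr}(X\overline X)+\overline x^{\,T}Kx$. Let $G$ be the group (generalized Galilei group) of matrices $\begin{pmatrix}1&p^*\\0&P\end{pmatrix}$ with $P\in O(V,K)_{e_{n+2}}$ and $p\in V$ with $p^*(e_{n+2})=0$, and let $\mathfrak g$ be its Lie algebra, the matrices $(X,x^* )\in\mathfrak g^\vee$ with $Xe_{n+2}=0$ and $x^*(e_{n+2})=0$. A special tuple is a pair $(Y,y)$ (written $(V,Y,y;K)$ in the paper) with $Y\in\mathfrak o(V,K)$, $y\in V$. Two special tuples $(Y,y)$ and $(Y',y')$ are equivalent if there exist $P\in O(V,K)_{e_{n+2}}$, vectors $v,p\in V$ with $p^*(e_{n+2})=0$, and $v_0\in\mathbb R$ such that $Y'+L_{v,e_{n+2}}=P(Y+L_{p,y})P^{-1}$ and $y'=Py+v_0e_{n+2}$. A special cotype is an equivalence class of special tuples. *)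

theory Defs
  imports "Jordan_Normal_Form.Matrix"
begin

(* V = R^(n+2), coordinates indexed 0..n+1; e_1 is index 0, e_(n+2) is index n+1.
   Matrices acting on g^vee are (n+3)x(n+3), indexed 0..n+2. *)

definition Kmat :: "nat \<Rightarrow> real mat \<Rightarrow> real mat" where
  "Kmat n Kt = mat (n+2) (n+2) (\<lambda>(i,j).
      if i = 0 \<and> j = n+1 then 1
      else if i = n+1 \<and> j = 0 then 1
      else if 1 \<le> i \<and> i \<le> n \<and> 1 \<le> j \<and> j \<le> n then Kt $$ (i-1, j-1)
      else 0)"

definition mtrace :: "real mat \<Rightarrow> real" where
  "mtrace A = (\<Sum>i<dim_row A. A $$ (i,i))"

definition elast :: "nat \<Rightarrow> real vec" where
  "elast n = unit_vec (n+2) (n+1)"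

(* xstar = x^T K, stored as a vector (the entries of the row vector) *)
definition xstar :: "real mat \<Rightarrow> real vec \<Rightarrow> real vec" where
  "xstar K x = transpose_mat K *\<^sub>v x"

definition Lop :: "real mat \<Rightarrow> real vec \<Rightarrow> real vec \<Rightarrow> real mat" where
  "Lop K u w = mat (dim_vec u) (dim_vec u)
      (\<lambda>(i,j). u $ i * xstar K w $ j - w $ i * xstar K u $ j)"

definition orth_grp :: "nat \<Rightarrow> real mat \<Rightarrow> real mat set" where
  "orth_grp N K = {P \<in> carrier_mat N N. transpose_mat P * K * P = K}"

definition orth_alg :: "nat \<Rightarrow> real mat \<Rightarrow> real mat set" where
  "orth_alg N K = {X \<in> carrier_mat N N. transpose_mat X * K + K * X = 0\<^sub>m N N}"

definition gvee_mat :: "nat \<Rightarrow> real mat \<Rightarrow> real mat \<Rightarrow> real vec \<Rightarrow> real mat" where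
  "gvee_mat n K X x = four_block_mat (0\<^sub>m 1 1) (mat_of_row (xstar K x)) (0\<^sub>m (n+2) 1) X"

definition galg :: "nat \<Rightarrow> real mat \<Rightarrow> real mat set" where
  "galg n K = {gvee_mat n K X x | X x. X \<in> orth_alg (n+2) K \<and> x \<in> carrier_vec (n+2)
                 \<and> X *\<^sub>v elast n = 0\<^sub>v (n+2) \<and> xstar K x \<bullet> elast n = 0}"

definition ggrp :: "nat \<Rightarrow> real mat \<Rightarrow> real mat set" where
  "ggrp n K = {four_block_mat (1\<^sub>m 1) (mat_of_row (xstar K p)) (0\<^sub>m (n+2) 1) P | P p.
                 P \<in> orth_grp (n+2) K \<and> P *\<^sub>v elast n = elast n
                 \<and> p \<in> carrier_vec (n+2) \<and> xstar K p \<bullet> elast n = 0}"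

definition lr_block :: "nat \<Rightarrow> real mat \<Rightarrow> real mat" where
  "lr_block n Z = mat (n+2) (n+2) (\<lambda>(i,j). Z $$ (i+1, j+1))"

definition top_row :: "nat \<Rightarrow> real mat \<Rightarrow> real vec" where
  "top_row n Z = vec (n+2) (\<lambda>j. Z $$ (0, j+1))"

(* mu_{Y,y}(Z) = <(Y,ystar) | (Xbar, xbarstar)> = 1/2 tr(Y Xbar) + xbar^T K y = 1/2 tr(Y Xbar) + xbarstar(y) *)
definition mu :: "nat \<Rightarrow> real mat \<Rightarrow> real vec \<Rightarrow> real mat \<Rightarrow> real" where
  "mu n Y y Z = 1/2 * mtrace (Y * lr_block n Z) + top_row n Z \<bullet> y"

definition special_equiv :: "nat \<Rightarrow> real mat \<Rightarrow> real mat \<Rightarrow> real vec \<Rightarrow> real mat \<Rightarrow> real vec \<Rightarrow> bool" where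
  "special_equiv n K Y y Y' y' \<longleftrightarrow>
     (\<exists>P Pinv v p v0. P \<in> orth_grp (n+2) K \<and> P *\<^sub>v elast n = elast n
        \<and> Pinv \<in> carrier_mat (n+2) (n+2) \<and> P * Pinv = 1\<^sub>m (n+2) \<and> Pinv * P = 1\<^sub>m (n+2)
        \<and> v \<in> carrier_vec (n+2) \<and> p \<in> carrier_vec (n+2) \<and> xstar K p \<bullet> elast n = 0
        \<and> Y' + Lop K v (elast n) = P * (Y + Lop K p y) * Pinv
        \<and> y' = P *\<^sub>v y + v0 \<cdot>\<^sub>v elast n)"

definition same_coadj_orbit :: "nat \<Rightarrow> real mat \<Rightarrow> (real mat \<Rightarrow> real) \<Rightarrow> (real mat \<Rightarrow> real) \<Rightarrow> bool" where
  "same_coadj_orbit n K f f' \<longleftrightarrow>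
     (\<exists>g ginv. g \<in> ggrp n K \<and> ginv \<in> carrier_mat (n+3) (n+3)
        \<and> g * ginv = 1\<^sub>m (n+3) \<and> ginv * g = 1\<^sub>m (n+3)
        \<and> (\<forall>Z \<in> galg n K. f' Z = f (ginv * Z * g)))"

(* elements of gstar: linear functionals on g (compared on g only) *)
definition lin_functional :: "nat \<Rightarrow> real mat \<Rightarrow> (real mat \<Rightarrow> real) \<Rightarrow> bool" where
  "lin_functional n K f \<longleftrightarrow>
     (\<forall>Z1 \<in> galg n K. \<forall>Z2 \<in> galg n K. f (Z1 + Z2) = f Z1 + f Z2)
     \<and> (\<forall>c. \<forall>Z \<in> galg n K. f (c \<cdot>\<^sub>m Z) = c * f Z)"

end

theory Submission
  imports Defs "Jordan_Normal_Form.Determinant"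
begin

(* Conjugating Z by the element of G with
   blocks P and xstar K p gives mu_{Y,y} (g^-1 Z g) = mu_{P (Y + L_{p,y}) P^-1, P y} Z, because
   tr (L_{p,y} M) = -2 (K p) . (M y) for M in o(V,K).  The tuples inducing the zero functional on g
   are exactly (L_{u,e_{n+2}}, c e_{n+2}): after subtracting L_{u,e_{n+2}} with u = W e_1, the
   remainder W' satisfies W' e_1 = 0, so X = K W' K is a test element of g, and
   tr (W' X) = tr (S S) = - |S|^2 for the skew matrix S = K W'.  These two facts identify
   equivalence of special tuples with lying in one coadjoint orbit.  Surjectivity is linear
   algebra: g is spanned by the elements with X = K (E_ab - E_ba) and r = e_k for 1 <= a, b, k <= n+1,
   and the values of a functional on them are matched by a suitable (Y, y). *)

declare add_2_eq_Suc' [simp del]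

lemma left_inverse_eq_right_inverse:
  assumes "A \<in> carrier_mat m m" "B \<in> carrier_mat m m" "C \<in> carrier_mat m m"
    and "A * B = 1\<^sub>m m" "B * C = 1\<^sub>m m"
  shows "A = (C :: 'a :: comm_ring_1 mat)"
proof -
  have "A = A * (B * C)" using assms by simp
  also have "\<dots> = (A * B) * C" by (rule assoc_mult_mat[OF assms(1-3), symmetric])
  also have "\<dots> = C" using assms by simp
  finally show ?thesis .
qed

lemma assoc_mult_mat_dim:
  "dim_col A = dim_row B \<Longrightarrow> dim_col B = dim_row C \<Longrightarrow> A * B * C = A * (B * (C :: 'a :: comm_ring mat))"
  by (rule assoc_mult_mat[of A "dim_row A" "dim_col A" B "dim_col B" C "dim_col C"]) auto

lemma assoc_mult_mat_vec_dim:
  "dim_col A = dim_row B \<Longrightarrow> dim_col B = dim_vec v \<Longrightarrow> (A * B) *\<^sub>v v = A *\<^sub>v (B *\<^sub>v (v :: 'a :: comm_ring vec))"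
  by (rule assoc_mult_mat_vec[of A "dim_row A" "dim_col A" B "dim_col B" v]) auto

lemma mult_mat_carrier_iff: "A * B \<in> carrier_mat nr nc \<longleftrightarrow> dim_row A = nr \<and> dim_col B = nc"
  unfolding carrier_mat_def mem_Collect_eq index_mult_mat ..

lemma smult_mat_mult_vec:
  "A \<in> carrier_mat nr nc \<Longrightarrow> v \<in> carrier_vec nc \<Longrightarrow> (c \<cdot>\<^sub>m A) *\<^sub>v v = c \<cdot>\<^sub>v (A *\<^sub>v (v :: 'a :: comm_ring vec))"
  by (rule eq_vecI) (auto simp: scalar_prod_def sum_distrib_left ac_simps)

lemma uminus_mat_mult_vec:
  "A \<in> carrier_mat nr nc \<Longrightarrow> v \<in> carrier_vec nc \<Longrightarrow> (- A) *\<^sub>v v = - (A *\<^sub>v (v :: 'a :: comm_ring vec))"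
  by (rule eq_vecI) auto

lemma mult_mat_vec_zero: "A \<in> carrier_mat nr nc \<Longrightarrow> A *\<^sub>v 0\<^sub>v nc = (0\<^sub>v nr :: 'a :: comm_ring vec)"
  by (rule eq_vecI) auto

lemma mtrace_mult:
  assumes "A \<in> carrier_mat m k" "B \<in> carrier_mat k m"
  shows "mtrace (A * B) = (\<Sum>i<m. \<Sum>j<k. A $$ (i,j) * B $$ (j,i))"
  using assms by (simp add: mtrace_def scalar_prod_def atLeast0LessThan)

lemma mtrace_mult_commute:
  assumes "A \<in> carrier_mat m k" "B \<in> carrier_mat k m"
  shows "mtrace (A * B) = mtrace (B * A)"
  by (simp add: mtrace_mult[OF assms] mtrace_mult[OF assms(2,1)] sum.swap[of _ "{..<m}"] mult.commute)

lemma mtrace_add: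
  "A \<in> carrier_mat m m \<Longrightarrow> B \<in> carrier_mat m m \<Longrightarrow> mtrace (A + B) = mtrace A + mtrace B"
  by (simp add: mtrace_def sum.distrib)

lemma mtrace_minus:
  "A \<in> carrier_mat m m \<Longrightarrow> B \<in> carrier_mat m m \<Longrightarrow> mtrace (A - B) = mtrace A - mtrace B"
  by (simp add: mtrace_def sum_subtractf)

lemma mtrace_smult: "A \<in> carrier_mat m m \<Longrightarrow> mtrace (c \<cdot>\<^sub>m A) = c * mtrace A"
  by (simp add: mtrace_def sum_distrib_left)

lemma mtrace_mult_restricted:
  assumes T: "T \<in> carrier_mat k k" and m: "m \<le> k"
  shows "mtrace (mat k k (\<lambda>(i,j). if i < m \<and> j < m then g j i else 0) * T) =
    (\<Sum>p\<in>{..<m} \<times> {..<m}. T $$ p * g (fst p) (snd p))"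
proof -
  let ?U = "mat k k (\<lambda>(i,j). if i < m \<and> j < m then g j i else 0)"
  have "mtrace (?U * T) = (\<Sum>i<k. \<Sum>j<k. ?U $$ (i,j) * T $$ (j,i))"
    using T by (intro mtrace_mult) auto
  also have "\<dots> = (\<Sum>i<m. \<Sum>j<m. T $$ (j,i) * g j i)"
  proof (rule sum.mono_neutral_cong_right)
    show "\<forall>i \<in> {..<k} - {..<m}. (\<Sum>j<k. ?U $$ (i,j) * T $$ (j,i)) = 0" by auto
    show "(\<Sum>j<k. ?U $$ (i,j) * T $$ (j,i)) = (\<Sum>j<m. T $$ (j,i) * g j i)" if "i \<in> {..<m}" for i
      using that m by (intro sum.mono_neutral_cong_right) auto
  qed (use m in auto)
  also have "\<dots> = (\<Sum>p\<in>{..<m} \<times> {..<m}. T $$ p * g (fst p) (snd p))"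
    by (subst sum.swap) (simp add: sum.cartesian_product split_def)
  finally show ?thesis .
qed

lemma skew_matD:
  assumes skew: "transpose_mat (A :: 'a :: ring mat) = - A" and i: "i < dim_row A" and j: "j < dim_col A"
  shows "A $$ (j,i) = - A $$ (i,j)"
proof -
  have "dim_col A = dim_row A" using arg_cong[OF skew, of dim_row] by simp
  then have "transpose_mat A $$ (i,j) = (- A) $$ (i,j)" using skew by simp
  then show ?thesis using i j \<open>dim_col A = dim_row A\<close> by simp
qed

lemma skew_matI:
  assumes A: "(A :: 'a :: ring mat) \<in> carrier_mat m m"
    and entries: "\<And>i j. i < m \<Longrightarrow> j < m \<Longrightarrow> A $$ (j,i) = - A $$ (i,j)"
  shows "transpose_mat A = - A"
proof (rule eq_matI)
  fix i j assume "i < dim_row (- A)" "j < dim_col (- A)"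
  then show "transpose_mat A $$ (i,j) = (- A) $$ (i,j)" using entries[of i j] A by simp
qed (use A in auto)

lemma skew_mat_add:
  fixes A B :: "'a :: comm_ring mat"
  assumes A: "A \<in> carrier_mat m m" "transpose_mat A = - A"
    and B: "B \<in> carrier_mat m m" "transpose_mat B = - B"
  shows "transpose_mat (A + B) = - (A + B)"
proof (rule eq_matI)
  fix i j assume "i < dim_row (- (A + B))" "j < dim_col (- (A + B))"
  then show "transpose_mat (A + B) $$ (i,j) = (- (A + B)) $$ (i,j)"
    using skew_matD[OF A(2), of i j] skew_matD[OF B(2), of i j] A B by simp
qed (use A B in auto)

lemma skew_mat_minus:
  fixes A B :: "'a :: comm_ring mat"
  assumes A: "A \<in> carrier_mat m m" "transpose_mat A = - A"
    and B: "B \<in> carrier_mat m m" "transpose_mat B = - B"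
  shows "transpose_mat (A - B) = - (A - B)"
proof (rule eq_matI)
  fix i j assume "i < dim_row (- (A - B))" "j < dim_col (- (A - B))"
  then show "transpose_mat (A - B) $$ (i,j) = (- (A - B)) $$ (i,j)"
    using skew_matD[OF A(2), of i j] skew_matD[OF B(2), of i j] A B by simp
qed (use A B in auto)

lemma skew_mat_smult:
  fixes A :: "'a :: comm_ring mat"
  assumes A: "A \<in> carrier_mat m m" "transpose_mat A = - A"
  shows "transpose_mat (c \<cdot>\<^sub>m A) = - (c \<cdot>\<^sub>m A)"
proof (rule eq_matI)
  fix i j assume "i < dim_row (- (c \<cdot>\<^sub>m A))" "j < dim_col (- (c \<cdot>\<^sub>m A))"
  then show "transpose_mat (c \<cdot>\<^sub>m A) $$ (i,j) = (- (c \<cdot>\<^sub>m A)) $$ (i,j)"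
    using skew_matD[OF A(2), of i j] A by simp
qed (use A in auto)

lemma transpose_congruence_skew:
  fixes P S :: "'a :: comm_ring mat"
  assumes P: "P \<in> carrier_mat m k" and S: "S \<in> carrier_mat m m" and skew: "transpose_mat S = - S"
  shows "transpose_mat (transpose_mat P * S * P) = - (transpose_mat P * S * P)"
proof -
  have "transpose_mat (transpose_mat P * S * P) = transpose_mat P * transpose_mat (transpose_mat P * S)"
    by (rule transpose_mult) (use P S in auto)
  also have "transpose_mat (transpose_mat P * S) = transpose_mat S * P"
    by (subst transpose_mult[of _ k m]) (use P S in auto)
  also have "transpose_mat P * (transpose_mat S * P) = - (transpose_mat P * S * P)"
    unfolding skew using P S by (simp add: assoc_mult_mat[of _ k m _ m _ k])
  finally show ?thesis .
qed

lemma skew_mat_eq_0_if_mtrace_square: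
  assumes A: "A \<in> carrier_mat m m" and skew: "transpose_mat A = - A" and tr: "mtrace (A * A) = 0"
  shows "A = 0\<^sub>m m m"
proof -
  have swap: "A $$ (j,i) = - A $$ (i,j)" if "i < m" "j < m" for i j
    using arg_cong[OF skew, of "\<lambda>M. M $$ (i,j)"] A that by simp
  have "mtrace (A * A) = (\<Sum>i<m. \<Sum>j<m. - (A $$ (i,j))\<^sup>2)"
    unfolding mtrace_mult[OF A A]
  proof (intro sum.cong refl)
    fix i j assume "i \<in> {..<m}" "j \<in> {..<m}"
    then show "A $$ (i,j) * A $$ (j,i) = - (A $$ (i,j))\<^sup>2"
      using swap[of i j] by (simp add: power2_eq_square)
  qed
  then have "(\<Sum>i<m. \<Sum>j<m. (A $$ (i,j))\<^sup>2) = 0"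
    using tr by (simp add: sum_negf)
  then have "(A $$ (i,j))\<^sup>2 = 0" if "i < m" "j < m" for i j
    using that by (simp add: sum_nonneg_eq_0_iff sum_nonneg)
  then show ?thesis using A by (intro eq_matI) auto
qed

definition skew_unit :: "nat \<Rightarrow> nat \<Rightarrow> nat \<Rightarrow> real mat" where
  "skew_unit m a b = mat m m (\<lambda>(i,j). (if i = a \<and> j = b then 1 else 0) - (if i = b \<and> j = a then 1 else 0))"

lemma skew_unit_carrier [simp]: "skew_unit m a b \<in> carrier_mat m m"
  by (simp add: skew_unit_def)

lemma dim_skew_unit [simp]: "dim_row (skew_unit m a b) = m" "dim_col (skew_unit m a b) = m"
  by (simp_all add: skew_unit_def)

lemma skew_unit_skew: "transpose_mat (skew_unit m a b) = - skew_unit m a b"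
proof (rule eq_matI)
  fix i j assume "i < dim_row (- skew_unit m a b)" "j < dim_col (- skew_unit m a b)"
  then have "i < m" "j < m" by (simp_all add: skew_unit_def)
  then show "transpose_mat (skew_unit m a b) $$ (i,j) = (- skew_unit m a b) $$ (i,j)"
    by (cases "i = a"; cases "j = b"; cases "i = b"; cases "j = a") (simp_all add: skew_unit_def)
qed (simp_all add: skew_unit_def)

definition mat_lincomb :: "nat \<Rightarrow> nat \<Rightarrow> 'i set \<Rightarrow> ('i \<Rightarrow> real) \<Rightarrow> ('i \<Rightarrow> real mat) \<Rightarrow> real mat" where
  "mat_lincomb nr nc A c F = mat nr nc (\<lambda>(i,j). \<Sum>k\<in>A. c k * F k $$ (i,j))"

lemma mat_lincomb_const_zero: "mat_lincomb nr nc A c (\<lambda>k. 0\<^sub>m nr nc) = 0\<^sub>m nr nc"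
  by (rule eq_matI) (auto simp: mat_lincomb_def)

lemma mat_lincomb_mult_left:
  assumes K: "K \<in> carrier_mat nr m" and F: "\<And>k. k \<in> A \<Longrightarrow> F k \<in> carrier_mat m nc"
  shows "mat_lincomb nr nc A c (\<lambda>k. K * F k) = K * mat_lincomb m nc A c F"
proof (rule eq_matI)
  fix i j assume "i < dim_row (K * mat_lincomb m nc A c F)" "j < dim_col (K * mat_lincomb m nc A c F)"
  then have i: "i < nr" and j: "j < nc" using K by (auto simp: mat_lincomb_def)
  have "(\<Sum>k\<in>A. c k * (K * F k) $$ (i,j)) = (\<Sum>k\<in>A. \<Sum>l<m. K $$ (i,l) * (c k * F k $$ (l,j)))"
  proof (intro sum.cong refl)
    fix k assume "k \<in> A"
    then have "F k \<in> carrier_mat m nc" by (rule F)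
    then show "c k * (K * F k) $$ (i,j) = (\<Sum>l<m. K $$ (i,l) * (c k * F k $$ (l,j)))"
      using K i j by (simp add: scalar_prod_def atLeast0LessThan sum_distrib_left ac_simps)
  qed
  also have "\<dots> = (\<Sum>l<m. K $$ (i,l) * (\<Sum>k\<in>A. c k * F k $$ (l,j)))"
    by (simp add: sum.swap[of _ A] sum_distrib_left)
  finally show "mat_lincomb nr nc A c (\<lambda>k. K * F k) $$ (i,j) = (K * mat_lincomb m nc A c F) $$ (i,j)"
    using K i j by (simp add: mat_lincomb_def scalar_prod_def atLeast0LessThan)
qed (use K in \<open>auto simp: mat_lincomb_def\<close>)

lemma mat_lincomb_skew_unit:
  assumes T: "T \<in> carrier_mat m m" "transpose_mat T = - T"
    and supp: "\<And>i j. i < m \<Longrightarrow> j < m \<Longrightarrow> \<not> (i < k \<and> j < k) \<Longrightarrow> T $$ (i,j) = 0"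
  shows "mat_lincomb m m ({..<k} \<times> {..<k}) (\<lambda>p. T $$ p / 2) (\<lambda>p. skew_unit m (fst p) (snd p)) = T"
proof (rule eq_matI)
  let ?I = "{..<k} \<times> {..<k}"
  fix i j assume "i < dim_row T" "j < dim_col T"
  then have i: "i < m" and j: "j < m" using T by auto
  have "(\<Sum>p\<in>?I. T $$ p / 2 * skew_unit m (fst p) (snd p) $$ (i,j))
      = (\<Sum>p\<in>?I. (if p = (i,j) then T $$ (i,j) / 2 else 0) - (if p = (j,i) then T $$ (j,i) / 2 else 0))"
  proof (rule sum.cong[OF refl])
    fix p assume "p \<in> ?I"
    obtain a b where p: "p = (a,b)" by (cases p)
    show "T $$ p / 2 * skew_unit m (fst p) (snd p) $$ (i,j) =
        (if p = (i,j) then T $$ (i,j) / 2 else 0) - (if p = (j,i) then T $$ (j,i) / 2 else 0)"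
      unfolding p using i j
      by (cases "a = i"; cases "b = j"; cases "a = j"; cases "b = i") (simp_all add: skew_unit_def)
  qed
  also have "\<dots> = (if i < k \<and> j < k then T $$ (i,j) / 2 - T $$ (j,i) / 2 else 0)"
    by (simp add: sum_subtractf sum.delta conj_commute)
  also have "\<dots> = T $$ (i,j)"
    using skew_matD[OF T(2), of i j] supp[OF i j] T(1) i j by auto
  finally show "mat_lincomb m m ?I (\<lambda>p. T $$ p / 2) (\<lambda>p. skew_unit m (fst p) (snd p)) $$ (i,j) = T $$ (i,j)"
    using i j by (simp add: mat_lincomb_def)
qed (use T in \<open>auto simp: mat_lincomb_def\<close>)

lemma mat_lincomb_unit_rows:
  assumes r: "r \<in> carrier_vec (n+2)" and r_last: "r $ (n+1) = 0"
  shows "mat_lincomb 1 (n+2) {..<n+1} (\<lambda>k. r $ k) (\<lambda>k. mat_of_row (unit_vec (n+2) k)) = mat_of_row r"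
proof (rule eq_matI)
  fix i j assume "i < dim_row (mat_of_row r)" "j < dim_col (mat_of_row r)"
  then have i: "i = 0" and j: "j < n+2" using r by auto
  have "(\<Sum>k<n+1. r $ k * mat_of_row (unit_vec (n+2) k) $$ (0,j)) = (\<Sum>k<n+1. if k = j then r $ j else 0)"
  proof (rule sum.cong[OF refl])
    fix k assume "k \<in> {..<n+1}"
    then show "r $ k * mat_of_row (unit_vec (n+2) k) $$ (0,j) = (if k = j then r $ j else 0)"
      using j by (cases "k = j") (simp_all add: index_unit_vec)
  qed
  also have "\<dots> = r $ j" using j r_last by (cases "j = n+1") (simp_all add: sum.delta)
  finally show "mat_lincomb 1 (n+2) {..<n+1} (\<lambda>k. r $ k) (\<lambda>k. mat_of_row (unit_vec (n+2) k)) $$ (i,j)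
      = mat_of_row r $$ (i,j)"
    using i j r by (simp add: mat_lincomb_def)
qed (use r in \<open>auto simp: mat_lincomb_def\<close>)

(* The paper's element (X, xstar K x) of g^vee is lie_block n (mat_of_row (xstar K x)) X, and the
   element of G with blocks P and xstar K p is grp_block n (mat_of_row (xstar K p)) P. *)
definition lie_block :: "nat \<Rightarrow> real mat \<Rightarrow> real mat \<Rightarrow> real mat" where
  "lie_block n R X = four_block_mat (0\<^sub>m 1 1) R (0\<^sub>m (n+2) 1) X"

definition grp_block :: "nat \<Rightarrow> real mat \<Rightarrow> real mat \<Rightarrow> real mat" where
  "grp_block n R P = four_block_mat (1\<^sub>m 1) R (0\<^sub>m (n+2) 1) P"

lemma lie_block_carrier [simp]:
  "X \<in> carrier_mat (n+2) (n+2) \<Longrightarrow> lie_block n R X \<in> carrier_mat (n+3) (n+3)"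
  unfolding lie_block_def using four_block_carrier_mat[of "0\<^sub>m 1 1" 1 1 X "n+2" "n+2" R]
  by (simp add: numeral_3_eq_3)

lemma grp_block_carrier [simp]:
  "P \<in> carrier_mat (n+2) (n+2) \<Longrightarrow> grp_block n R P \<in> carrier_mat (n+3) (n+3)"
  unfolding grp_block_def using four_block_carrier_mat[of "1\<^sub>m 1" 1 1 P "n+2" "n+2" R]
  by (simp add: numeral_3_eq_3)

lemma grp_block_mult:
  assumes "R \<in> carrier_mat 1 (n+2)" "P \<in> carrier_mat (n+2) (n+2)"
    "R' \<in> carrier_mat 1 (n+2)" "P' \<in> carrier_mat (n+2) (n+2)"
  shows "grp_block n R P * grp_block n R' P' = grp_block n (R' + R * P') (P * P')"
  unfolding grp_block_def
  by (subst mult_four_block_mat[of _ 1 1 _ "n+2" _ "n+2" _ _ 1 _ "n+2"]) (use assms in auto)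

lemma grp_block_mult_lie_block:
  assumes "R' \<in> carrier_mat 1 (n+2)" "P \<in> carrier_mat (n+2) (n+2)"
    "R \<in> carrier_mat 1 (n+2)" "X \<in> carrier_mat (n+2) (n+2)"
  shows "grp_block n R' P * lie_block n R X = lie_block n (R + R' * X) (P * X)"
  unfolding grp_block_def lie_block_def
  by (subst mult_four_block_mat[of _ 1 1 _ "n+2" _ "n+2" _ _ 1 _ "n+2"]) (use assms in auto)

lemma lie_block_mult_grp_block:
  assumes "R \<in> carrier_mat 1 (n+2)" "X \<in> carrier_mat (n+2) (n+2)"
    "R' \<in> carrier_mat 1 (n+2)" "P \<in> carrier_mat (n+2) (n+2)"
  shows "lie_block n R X * grp_block n R' P = lie_block n (R * P) (X * P)"
  unfolding grp_block_def lie_block_def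
  by (subst mult_four_block_mat[of _ 1 1 _ "n+2" _ "n+2" _ _ 1 _ "n+2"]) (use assms in auto)

lemma grp_block_one: "grp_block n (0\<^sub>m 1 (n+2)) (1\<^sub>m (n+2)) = 1\<^sub>m (n+3)"
  unfolding grp_block_def using four_block_one_mat[of 1 "n+2"] by (simp add: numeral_3_eq_3)

lemma grp_block_inverse:
  assumes R: "R \<in> carrier_mat 1 (n+2)" and P: "P \<in> carrier_mat (n+2) (n+2)"
    and Q: "Q \<in> carrier_mat (n+2) (n+2)" and PQ: "P * Q = 1\<^sub>m (n+2)" and QP: "Q * P = 1\<^sub>m (n+2)"
  shows "grp_block n R P * grp_block n (- R * Q) Q = 1\<^sub>m (n+3)"
    and "grp_block n (- R * Q) Q * grp_block n R P = 1\<^sub>m (n+3)"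
proof -
  have RQ: "- R * Q \<in> carrier_mat 1 (n+2)" using R Q by simp
  have "- R * Q + R * Q = 0\<^sub>m 1 (n+2)"
    using R Q by (intro eq_matI) auto
  then show "grp_block n R P * grp_block n (- R * Q) Q = 1\<^sub>m (n+3)"
    using grp_block_mult[OF R P RQ Q] PQ grp_block_one by simp
  have "- R * Q * P = - R"
    using R P Q QP by (simp add: assoc_mult_mat_dim)
  then have "R + - R * Q * P = 0\<^sub>m 1 (n+2)"
    using R by (intro eq_matI) auto
  then show "grp_block n (- R * Q) Q * grp_block n R P = 1\<^sub>m (n+3)"
    using grp_block_mult[OF RQ Q R P] QP grp_block_one by simp
qed

lemma lie_block_add:
  assumes "R \<in> carrier_mat 1 (n+2)" "X \<in> carrier_mat (n+2) (n+2)"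
    "R' \<in> carrier_mat 1 (n+2)" "X' \<in> carrier_mat (n+2) (n+2)"
  shows "lie_block n R X + lie_block n R' X' = lie_block n (R + R') (X + X')"
  unfolding lie_block_def
  by (subst add_four_block_mat[of _ 1 1 _ "n+2" _ "n+2"]) (use assms in auto)

lemma lie_block_smult:
  assumes "R \<in> carrier_mat 1 (n+2)" "X \<in> carrier_mat (n+2) (n+2)"
  shows "c \<cdot>\<^sub>m lie_block n R X = lie_block n (c \<cdot>\<^sub>m R) (c \<cdot>\<^sub>m X)"
  unfolding lie_block_def
  by (subst smult_four_block_mat[of _ 1 1 _ "n+2" _ "n+2"]) (use assms in auto)

lemma mat_lincomb_lie_block:
  assumes "\<And>k. k \<in> A \<Longrightarrow> R k \<in> carrier_mat 1 (n+2) \<and> X k \<in> carrier_mat (n+2) (n+2)"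
  shows "mat_lincomb (n+3) (n+3) A c (\<lambda>k. lie_block n (R k) (X k)) =
    lie_block n (mat_lincomb 1 (n+2) A c R) (mat_lincomb (n+2) (n+2) A c X)"
proof (rule eq_matI)
  fix i j assume ij: "i < dim_row (lie_block n (mat_lincomb 1 (n+2) A c R) (mat_lincomb (n+2) (n+2) A c X))"
    "j < dim_col (lie_block n (mat_lincomb 1 (n+2) A c R) (mat_lincomb (n+2) (n+2) A c X))"
  then have i: "i < n+3" and j: "j < n+3" by (auto simp: lie_block_def mat_lincomb_def)
  have entry: "lie_block n (R k) (X k) $$ (i,j) =
      (if j = 0 then 0 else if i = 0 then R k $$ (0, j-1) else X k $$ (i-1, j-1))" if "k \<in> A" for k
    using assms[OF that] i j by (auto simp: lie_block_def)
  show "mat_lincomb (n+3) (n+3) A c (\<lambda>k. lie_block n (R k) (X k)) $$ (i,j) =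
      lie_block n (mat_lincomb 1 (n+2) A c R) (mat_lincomb (n+2) (n+2) A c X) $$ (i,j)"
    using i j by (simp add: mat_lincomb_def entry cong: sum.cong) (auto simp: lie_block_def mat_lincomb_def)
qed (auto simp: lie_block_def mat_lincomb_def)

lemma lr_block_lie_block: "X \<in> carrier_mat (n+2) (n+2) \<Longrightarrow> lr_block n (lie_block n R X) = X"
  by (rule eq_matI) (auto simp: lr_block_def lie_block_def)

lemma top_row_lie_block:
  "R \<in> carrier_mat 1 (n+2) \<Longrightarrow> X \<in> carrier_mat (n+2) (n+2) \<Longrightarrow> top_row n (lie_block n R X) = row R 0"
  by (rule eq_vecI) (auto simp: top_row_def lie_block_def)

lemma mu_lie_block:
  "R \<in> carrier_mat 1 (n+2) \<Longrightarrow> X \<in> carrier_mat (n+2) (n+2) \<Longrightarrow>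
   mu n Y y (lie_block n R X) = 1/2 * mtrace (Y * X) + row R 0 \<bullet> y"
  by (simp add: mu_def lr_block_lie_block top_row_lie_block)

lemma mu_conj_lie_block:
  assumes q: "q \<in> carrier_vec (n+2)" and r: "r \<in> carrier_vec (n+2)" and y: "y \<in> carrier_vec (n+2)"
    and P: "P \<in> carrier_mat (n+2) (n+2)" and Q: "Q \<in> carrier_mat (n+2) (n+2)"
    and X: "X \<in> carrier_mat (n+2) (n+2)"
  shows "mu n Y y (grp_block n (- mat_of_row q * Q) Q * lie_block n (mat_of_row r) X * grp_block n (mat_of_row q) P)
    = 1/2 * mtrace (Y * (Q * X * P)) + r \<bullet> (P *\<^sub>v y) - q \<bullet> ((Q * X * P) *\<^sub>v y)"
proof -
  define C where "C = mat_of_row q * Q * X"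
  define R where "R = (mat_of_row r + - C) * P"
  have C: "C \<in> carrier_mat 1 (n+2)" using q Q X by (simp add: C_def mult_mat_carrier_iff)
  have R: "R \<in> carrier_mat 1 (n+2)" using r C P by (simp add: R_def mult_mat_carrier_iff)
  have Rq: "- mat_of_row q * Q \<in> carrier_mat 1 (n+2)" using q Q by (simp add: mult_mat_carrier_iff)
  have "grp_block n (- mat_of_row q * Q) Q * lie_block n (mat_of_row r) X =
      lie_block n (mat_of_row r + - C) (Q * X)"
    unfolding C_def using grp_block_mult_lie_block[OF Rq Q _ X] r q Q X by simp
  then have conj: "grp_block n (- mat_of_row q * Q) Q * lie_block n (mat_of_row r) X * grp_block n (mat_of_row q) P
      = lie_block n R (Q * X * P)"
    unfolding R_def using lie_block_mult_grp_block[OF _ _ _ P] r C q Q X by simp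
  have "R *\<^sub>v y = (mat_of_row r + - C) *\<^sub>v (P *\<^sub>v y)"
    using r C P y by (simp add: R_def assoc_mult_mat_vec_dim)
  also have "\<dots> = mat_of_row r *\<^sub>v (P *\<^sub>v y) + - (C *\<^sub>v (P *\<^sub>v y))"
    using r C P y by (simp add: add_mult_distrib_mat_vec[of _ 1 "n+2"] uminus_mat_mult_vec)
  also have "C *\<^sub>v (P *\<^sub>v y) = mat_of_row q *\<^sub>v ((Q * X * P) *\<^sub>v y)"
    using q Q X P y by (simp add: C_def assoc_mult_mat_vec_dim)
  finally have "(R *\<^sub>v y) $ 0 = r \<bullet> (P *\<^sub>v y) - q \<bullet> ((Q * X * P) *\<^sub>v y)"
    using r q P Q X y by simp
  then show ?thesis
    unfolding conj using R P Q X by (simp add: mu_lie_block)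
qed

lemma mu_minus:
  assumes "A \<in> carrier_mat (n+2) (n+2)" "B \<in> carrier_mat (n+2) (n+2)"
    and "a \<in> carrier_vec (n+2)" "b \<in> carrier_vec (n+2)"
  shows "mu n (A - B) (a - b) Z = mu n A a Z - mu n B b Z"
proof -
  have X: "lr_block n Z \<in> carrier_mat (n+2) (n+2)" and t: "top_row n Z \<in> carrier_vec (n+2)"
    by (simp_all add: lr_block_def top_row_def)
  have "mtrace ((A - B) * lr_block n Z) = mtrace (A * lr_block n Z) - mtrace (B * lr_block n Z)"
    using assms X by (simp add: minus_mult_distrib_mat mtrace_minus[of _ "n+2"] mult_mat_carrier_iff)
  moreover have "top_row n Z \<bullet> (a - b) = top_row n Z \<bullet> a - top_row n Z \<bullet> b"
    using assms t by (simp add: scalar_prod_minus_distrib)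
  ultimately show ?thesis by (simp add: mu_def algebra_simps)
qed

(* For k, a, b < n+1 these elements span g; row_coeffs and skew_coeffs record the values of a
   functional on them. *)
definition galg_row_basis :: "nat \<Rightarrow> nat \<Rightarrow> real mat" where
  "galg_row_basis n k = lie_block n (mat_of_row (unit_vec (n+2) k)) (0\<^sub>m (n+2) (n+2))"

definition galg_skew_basis :: "nat \<Rightarrow> real mat \<Rightarrow> nat \<Rightarrow> nat \<Rightarrow> real mat" where
  "galg_skew_basis n K a b = lie_block n (mat_of_row (0\<^sub>v (n+2))) (K * skew_unit (n+2) a b)"

definition row_coeffs :: "nat \<Rightarrow> (real mat \<Rightarrow> real) \<Rightarrow> real vec" where
  "row_coeffs n f = vec (n+2) (\<lambda>k. if k < n+1 then f (galg_row_basis n k) else 0)"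

definition skew_coeffs :: "nat \<Rightarrow> real mat \<Rightarrow> (real mat \<Rightarrow> real) \<Rightarrow> real mat" where
  "skew_coeffs n K f = mat (n+2) (n+2) (\<lambda>(i,j). if i < n+1 \<and> j < n+1 then f (galg_skew_basis n K j i) else 0)"

lemma sum_lessThan_add_2:
  "(\<Sum>k<n+2. F k) = F 0 + (\<Sum>k<n. F (Suc k)) + F (n+1)"
proof -
  have "(\<Sum>k<n+2. F k) = (\<Sum>k<Suc n. F k) + F (n+1)" by (simp add: add_2_eq_Suc')
  then show ?thesis by (simp add: sum.lessThan_Suc_shift del: sum.lessThan_Suc)
qed

lemma Kmat_carrier: "Kmat n Kt \<in> carrier_mat (n+2) (n+2)"
  by (simp add: Kmat_def)

lemma Kmat_symmetric:
  assumes "Kt \<in> carrier_mat n n" "transpose_mat Kt = Kt"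
  shows "transpose_mat (Kmat n Kt) = Kmat n Kt"
proof (rule eq_matI)
  fix i j assume "i < dim_row (Kmat n Kt)" "j < dim_col (Kmat n Kt)"
  moreover have "Kt $$ (j-1,i-1) = Kt $$ (i-1,j-1)" if "1 \<le> i" "i \<le> n" "1 \<le> j" "j \<le> n"
    using arg_cong[OF assms(2), of "\<lambda>M. M $$ (i-1,j-1)"] assms(1) that by simp
  ultimately show "transpose_mat (Kmat n Kt) $$ (i,j) = Kmat n Kt $$ (i,j)"
    by (auto simp: Kmat_def)
qed (auto simp: Kmat_def)

lemma Kmat_involution:
  assumes Kt: "Kt \<in> carrier_mat n n" and Kt_sq: "Kt * Kt = 1\<^sub>m n"
  shows "Kmat n Kt * Kmat n Kt = 1\<^sub>m (n+2)"
proof (rule eq_matI)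
  let ?K = "Kmat n Kt"
  fix i j assume "i < dim_row (1\<^sub>m (n+2) :: real mat)" "j < dim_col (1\<^sub>m (n+2) :: real mat)"
  then have i: "i < n+2" and j: "j < n+2" by auto
  have middle: "(\<Sum>k<n. ?K $$ (i, Suc k) * ?K $$ (Suc k, j)) =
      (if 1 \<le> i \<and> i \<le> n \<and> 1 \<le> j \<and> j \<le> n then 1\<^sub>m n $$ (i-1, j-1) else 0)"
  proof (cases "1 \<le> i \<and> i \<le> n \<and> 1 \<le> j \<and> j \<le> n")
    case True
    then have "(\<Sum>k<n. ?K $$ (i, Suc k) * ?K $$ (Suc k, j)) = (Kt * Kt) $$ (i-1, j-1)"
      using Kt by (auto simp: Kmat_def scalar_prod_def atLeast0LessThan intro!: sum.cong)
    then show ?thesis using True Kt_sq by simp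
  next
    case False
    then show ?thesis using i j by (auto simp: Kmat_def intro!: sum.neutral)
  qed
  have "(?K * ?K) $$ (i,j) = (\<Sum>k<n+2. ?K $$ (i,k) * ?K $$ (k,j))"
    using i j by (simp add: Kmat_def scalar_prod_def atLeast0LessThan)
  also have "\<dots> = 1\<^sub>m (n+2) $$ (i,j)"
    unfolding sum_lessThan_add_2 middle using i j by (auto simp: Kmat_def)
  finally show "(?K * ?K) $$ (i,j) = 1\<^sub>m (n+2) $$ (i,j)" .
qed (auto simp: Kmat_def)

lemma Kmat_elast: "Kmat n Kt *\<^sub>v elast n = unit_vec (n+2) 0"
  by (rule eq_vecI) (auto simp: Kmat_def elast_def)

locale galilei_form =
  fixes n :: nat and K :: "real mat"
  assumes K_carrier: "K \<in> carrier_mat (n+2) (n+2)"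
    and K_symmetric: "transpose_mat K = K"
    and K_involution: "K * K = 1\<^sub>m (n+2)"
    and K_elast: "K *\<^sub>v elast n = unit_vec (n+2) 0"
begin

lemma dim_K [simp]: "dim_row K = n+2" "dim_col K = n+2"
  using K_carrier by auto

lemma xstar_eq: "xstar K x = K *\<^sub>v x"
  by (simp add: xstar_def K_symmetric)

lemma elast_carrier [simp]: "elast n \<in> carrier_vec (n+2)"
  by (simp add: elast_def)

lemma dim_elast [simp]: "dim_vec (elast n) = n+2"
  by (simp add: elast_def)

lemma scalar_prod_elast: "v \<in> carrier_vec (n+2) \<Longrightarrow> v \<bullet> elast n = v $ (n+1)"
  by (simp add: elast_def)

lemma K_mult_vec_carrier [simp]: "x \<in> carrier_vec (n+2) \<Longrightarrow> K *\<^sub>v x \<in> carrier_vec (n+2)"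
  using K_carrier by simp

lemma K_K_mult_vec: "x \<in> carrier_vec (n+2) \<Longrightarrow> K *\<^sub>v (K *\<^sub>v x) = x"
  using K_carrier K_involution by (simp flip: assoc_mult_mat_vec)

lemma K_K_mult: "X \<in> carrier_mat (n+2) m \<Longrightarrow> K * (K * X) = X"
  using K_carrier K_involution by (simp flip: assoc_mult_mat)

lemma K_unit_0: "K *\<^sub>v unit_vec (n+2) 0 = elast n"
  using K_K_mult_vec[of "elast n"] K_elast by simp

lemma K_scalar_prod_swap:
  "x \<in> carrier_vec (n+2) \<Longrightarrow> y \<in> carrier_vec (n+2) \<Longrightarrow> (K *\<^sub>v x) \<bullet> y = x \<bullet> (K *\<^sub>v y)"
  using transpose_vec_mult_scalar[OF K_carrier, of y x] K_symmetric by simp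

lemma K_mult_vec_last: "x \<in> carrier_vec (n+2) \<Longrightarrow> (K *\<^sub>v x) $ (n+1) = x $ 0"
  using K_scalar_prod_swap[of x "elast n"] by (simp add: scalar_prod_elast K_elast)

lemma K_mult_vec_0: "x \<in> carrier_vec (n+2) \<Longrightarrow> (K *\<^sub>v x) $ 0 = x $ (n+1)"
  using K_mult_vec_last[of "K *\<^sub>v x"] by (simp add: K_K_mult_vec)

lemma xstar_scalar_prod_elast:
  assumes "x \<in> carrier_vec (n+2)"
  shows "xstar K x \<bullet> elast n = x $ 0"
  using assms K_mult_vec_last[OF assms] by (simp only: xstar_eq scalar_prod_elast K_mult_vec_carrier)

lemma orth_alg_iff:
  "X \<in> orth_alg (n+2) K \<longleftrightarrow> X \<in> carrier_mat (n+2) (n+2) \<and> transpose_mat (K * X) = - (K * X)"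
proof (cases "X \<in> carrier_mat (n+2) (n+2)")
  case True
  then have "transpose_mat (K * X) = transpose_mat X * K"
    using K_carrier by (simp add: transpose_mult K_symmetric)
  moreover have "A + B = 0\<^sub>m (n+2) (n+2) \<longleftrightarrow> A = - B"
    if "A \<in> carrier_mat (n+2) (n+2)" "B \<in> carrier_mat (n+2) (n+2)" for A B :: "real mat"
    using that by (auto simp: mat_eq_iff eq_neg_iff_add_eq_0)
  ultimately show ?thesis
    using True K_carrier by (simp add: orth_alg_def)
qed (simp add: orth_alg_def)

lemma orth_alg_carrier: "X \<in> orth_alg (n+2) K \<Longrightarrow> X \<in> carrier_mat (n+2) (n+2)"
  by (simp add: orth_alg_def)

lemma orth_alg_skew_form:
  assumes X: "X \<in> orth_alg (n+2) K" and u: "u \<in> carrier_vec (n+2)" and w: "w \<in> carrier_vec (n+2)"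
  shows "(K *\<^sub>v w) \<bullet> (X *\<^sub>v u) = - ((K *\<^sub>v u) \<bullet> (X *\<^sub>v w))"
proof -
  have Xc: "X \<in> carrier_mat (n+2) (n+2)" and skew: "transpose_mat (K * X) = - (K * X)"
    using X by (auto simp: orth_alg_iff)
  have KX: "K * X \<in> carrier_mat (n+2) (n+2)" using Xc K_carrier by simp
  have "(K *\<^sub>v w) \<bullet> (X *\<^sub>v u) = w \<bullet> ((K * X) *\<^sub>v u)"
    using K_scalar_prod_swap Xc u w K_carrier by simp
  also have "\<dots> = (transpose_mat (K * X) *\<^sub>v w) \<bullet> u"
    using transpose_vec_mult_scalar[OF KX u w] by simp
  also have "transpose_mat (K * X) = - (K * X)" by (rule skew)
  also have "(- (K * X)) *\<^sub>v w = - ((K * X) *\<^sub>v w)"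
    by (rule eq_vecI) (use KX w in auto)
  also have "(- ((K * X) *\<^sub>v w)) \<bullet> u = - (u \<bullet> ((K * X) *\<^sub>v w))"
    using KX u w by (simp add: comm_scalar_prod[of _ "n+2"])
  also have "u \<bullet> ((K * X) *\<^sub>v w) = (K *\<^sub>v u) \<bullet> (X *\<^sub>v w)"
    using K_scalar_prod_swap Xc u w K_carrier by simp
  finally show ?thesis .
qed

lemma K_congruence_skew:
  "S \<in> carrier_mat (n+2) (n+2) \<Longrightarrow> transpose_mat S = - S \<Longrightarrow> transpose_mat (K * S * K) = - (K * S * K)"
  using transpose_congruence_skew[OF K_carrier] K_symmetric by metis

lemma orth_alg_add:
  assumes "A \<in> orth_alg (n+2) K" "B \<in> orth_alg (n+2) K"
  shows "A + B \<in> orth_alg (n+2) K"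
proof -
  have A: "A \<in> carrier_mat (n+2) (n+2)" "transpose_mat (K * A) = - (K * A)"
    and B: "B \<in> carrier_mat (n+2) (n+2)" "transpose_mat (K * B) = - (K * B)"
    using assms by (auto simp: orth_alg_iff)
  have "K * (A + B) = K * A + K * B"
    using A B K_carrier by (simp add: mult_add_distrib_mat)
  then show ?thesis
    using skew_mat_add[of "K * A" "n+2" "K * B"] A B K_carrier by (simp add: orth_alg_iff)
qed

lemma orth_alg_minus:
  assumes "A \<in> orth_alg (n+2) K" "B \<in> orth_alg (n+2) K"
  shows "A - B \<in> orth_alg (n+2) K"
proof -
  have A: "A \<in> carrier_mat (n+2) (n+2)" "transpose_mat (K * A) = - (K * A)"
    and B: "B \<in> carrier_mat (n+2) (n+2)" "transpose_mat (K * B) = - (K * B)"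
    using assms by (auto simp: orth_alg_iff)
  have "K * (A - B) = K * A - K * B"
    using A B K_carrier by (simp add: mult_minus_distrib_mat)
  moreover have "A - B \<in> carrier_mat (n+2) (n+2)" using A B by (metis minus_carrier_mat)
  ultimately show ?thesis
    using skew_mat_minus[of "K * A" "n+2" "K * B"] A B K_carrier by (simp add: orth_alg_iff)
qed

lemma orth_alg_smult:
  assumes "A \<in> orth_alg (n+2) K"
  shows "c \<cdot>\<^sub>m A \<in> orth_alg (n+2) K"
proof -
  have A: "A \<in> carrier_mat (n+2) (n+2)" "transpose_mat (K * A) = - (K * A)"
    using assms by (auto simp: orth_alg_iff)
  have "K * (c \<cdot>\<^sub>m A) = c \<cdot>\<^sub>m (K * A)"
    using A K_carrier by (simp add: mult_smult_distrib)
  then show ?thesis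
    using skew_mat_smult[of "K * A" "n+2"] A K_carrier by (simp add: orth_alg_iff)
qed

lemma zero_in_orth_alg: "0\<^sub>m (n+2) (n+2) \<in> orth_alg (n+2) K"
  by (simp add: orth_alg_def)

lemma mult_K_in_orth_alg:
  assumes "U \<in> carrier_mat (n+2) (n+2)" "transpose_mat U = - U"
  shows "U * K \<in> orth_alg (n+2) K"
  using K_congruence_skew[OF assms] assms(1) K_carrier
  by (simp add: orth_alg_iff assoc_mult_mat[of K _ _ U])

lemma K_mult_in_orth_alg:
  assumes "S \<in> carrier_mat (n+2) (n+2)" "transpose_mat S = - S"
  shows "K * S \<in> orth_alg (n+2) K"
  using assms K_carrier by (simp add: orth_alg_iff K_K_mult)

lemma dim_Lop [simp]: "dim_row (Lop K u w) = dim_vec u" "dim_col (Lop K u w) = dim_vec u"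
  by (simp_all add: Lop_def)

lemma Lop_carrier [simp]: "u \<in> carrier_vec (n+2) \<Longrightarrow> Lop K u w \<in> carrier_mat (n+2) (n+2)"
  by (simp add: Lop_def)

lemma row_Lop:
  "u \<in> carrier_vec (n+2) \<Longrightarrow> w \<in> carrier_vec (n+2) \<Longrightarrow> i < n+2 \<Longrightarrow>
   row (Lop K u w) i = u $ i \<cdot>\<^sub>v (K *\<^sub>v w) - w $ i \<cdot>\<^sub>v (K *\<^sub>v u)"
  by (rule eq_vecI) (auto simp: Lop_def xstar_eq)

lemma col_Lop:
  "u \<in> carrier_vec (n+2) \<Longrightarrow> w \<in> carrier_vec (n+2) \<Longrightarrow> j < n+2 \<Longrightarrow>
   col (Lop K u w) j = (K *\<^sub>v w) $ j \<cdot>\<^sub>v u - (K *\<^sub>v u) $ j \<cdot>\<^sub>v w"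
  by (rule eq_vecI) (auto simp: Lop_def xstar_eq)

lemma Lop_mult_vec:
  assumes u: "u \<in> carrier_vec (n+2)" and w: "w \<in> carrier_vec (n+2)" and x: "x \<in> carrier_vec (n+2)"
  shows "Lop K u w *\<^sub>v x = ((K *\<^sub>v w) \<bullet> x) \<cdot>\<^sub>v u - ((K *\<^sub>v u) \<bullet> x) \<cdot>\<^sub>v w"
proof (rule eq_vecI)
  fix i assume "i < dim_vec (((K *\<^sub>v w) \<bullet> x) \<cdot>\<^sub>v u - ((K *\<^sub>v u) \<bullet> x) \<cdot>\<^sub>v w)"
  then have i: "i < n+2" using w by simp
  then show "(Lop K u w *\<^sub>v x) $ i = (((K *\<^sub>v w) \<bullet> x) \<cdot>\<^sub>v u - ((K *\<^sub>v u) \<bullet> x) \<cdot>\<^sub>v w) $ i"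
    using u w x by (simp add: row_Lop minus_scalar_prod_distrib[of _ "n+2"])
qed (use u w in simp)

lemma K_mult_Lop:
  assumes u: "u \<in> carrier_vec (n+2)" and w: "w \<in> carrier_vec (n+2)"
  shows "K * Lop K u w =
    mat (n+2) (n+2) (\<lambda>(i,j). (K *\<^sub>v u) $ i * (K *\<^sub>v w) $ j - (K *\<^sub>v w) $ i * (K *\<^sub>v u) $ j)"
  using u w K_carrier by (intro eq_matI) (auto simp: col_Lop scalar_prod_minus_distrib[of _ "n+2"])

lemma Lop_in_orth_alg:
  assumes u: "u \<in> carrier_vec (n+2)" and w: "w \<in> carrier_vec (n+2)"
  shows "Lop K u w \<in> orth_alg (n+2) K"
proof -
  have "transpose_mat (K * Lop K u w) = - (K * Lop K u w)"
    unfolding K_mult_Lop[OF u w] by (intro eq_matI) auto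
  then show ?thesis using u by (simp add: orth_alg_iff)
qed

lemma Lop_uminus: "u \<in> carrier_vec (n+2) \<Longrightarrow> Lop K (- u) w = - Lop K u w"
  by (rule eq_matI) (auto simp: Lop_def xstar_eq)

lemma mtrace_mult_Lop:
  assumes M: "M \<in> orth_alg (n+2) K" and u: "u \<in> carrier_vec (n+2)" and w: "w \<in> carrier_vec (n+2)"
  shows "mtrace (M * Lop K u w) = - 2 * ((K *\<^sub>v u) \<bullet> (M *\<^sub>v w))"
proof -
  have Mc: "M \<in> carrier_mat (n+2) (n+2)" using M by (rule orth_alg_carrier)
  have "mtrace (M * Lop K u w) =
      (\<Sum>i<n+2. (K *\<^sub>v w) $ i * (M *\<^sub>v u) $ i - (K *\<^sub>v u) $ i * (M *\<^sub>v w) $ i)"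
    unfolding mtrace_def using Mc u w
    by (intro sum.cong) (auto simp: col_Lop scalar_prod_minus_distrib[of _ "n+2"] mult.commute)
  also have "\<dots> = (K *\<^sub>v w) \<bullet> (M *\<^sub>v u) - (K *\<^sub>v u) \<bullet> (M *\<^sub>v w)"
    using Mc by (simp add: scalar_prod_def sum_subtractf atLeast0LessThan)
  also have "\<dots> = - 2 * ((K *\<^sub>v u) \<bullet> (M *\<^sub>v w))"
    using orth_alg_skew_form[OF M u w] by simp
  finally show ?thesis .
qed

lemma orth_grp_carrier: "P \<in> orth_grp (n+2) K \<Longrightarrow> P \<in> carrier_mat (n+2) (n+2)"
  by (simp add: orth_grp_def)

lemma transpose_orth_grp_mult_K:
  assumes P: "P \<in> orth_grp (n+2) K" and Q: "Q \<in> carrier_mat (n+2) (n+2)" and PQ: "P * Q = 1\<^sub>m (n+2)"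
  shows "transpose_mat P * K = K * Q"
proof -
  have Pc: "P \<in> carrier_mat (n+2) (n+2)" and PKP: "transpose_mat P * K * P = K"
    using P by (auto simp: orth_grp_def)
  have "transpose_mat P * K = transpose_mat P * K * (P * Q)" using PQ Pc by simp
  also have "\<dots> = (transpose_mat P * K * P) * Q" using Pc Q by (simp add: assoc_mult_mat_dim)
  finally show ?thesis using PKP by simp
qed

lemma orth_grp_inverse:
  assumes P: "P \<in> orth_grp (n+2) K" and Q: "Q \<in> carrier_mat (n+2) (n+2)" and PQ: "P * Q = 1\<^sub>m (n+2)"
  shows "Q \<in> orth_grp (n+2) K"
proof -
  have Pc: "P \<in> carrier_mat (n+2) (n+2)" using P by (rule orth_grp_carrier)
  have "transpose_mat Q * K * Q = transpose_mat Q * (transpose_mat P * K)"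
    using transpose_orth_grp_mult_K[OF P Q PQ] Q by (simp add: assoc_mult_mat_dim)
  also have "\<dots> = transpose_mat (P * Q) * K"
    using Pc Q by (simp add: transpose_mult assoc_mult_mat_dim)
  finally show ?thesis using PQ Q by (simp add: orth_grp_def)
qed

lemma orth_alg_conj:
  assumes P: "P \<in> orth_grp (n+2) K" and Q: "Q \<in> carrier_mat (n+2) (n+2)" and PQ: "P * Q = 1\<^sub>m (n+2)"
    and X: "X \<in> orth_alg (n+2) K"
  shows "Q * X * P \<in> orth_alg (n+2) K"
proof -
  have Pc: "P \<in> carrier_mat (n+2) (n+2)" using P by (rule orth_grp_carrier)
  have Xc: "X \<in> carrier_mat (n+2) (n+2)" and skew: "transpose_mat (K * X) = - (K * X)"
    using X by (auto simp: orth_alg_iff)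
  have "K * (Q * X * P) = (K * Q) * (X * P)"
    using Pc Q Xc by (simp add: assoc_mult_mat_dim)
  also have "K * Q = transpose_mat P * K"
    using transpose_orth_grp_mult_K[OF P Q PQ] by simp
  also have "transpose_mat P * K * (X * P) = transpose_mat P * (K * X) * P"
    using Pc Xc by (simp add: assoc_mult_mat_dim)
  finally have KQXP: "K * (Q * X * P) = transpose_mat P * (K * X) * P" .
  have "K * X \<in> carrier_mat (n+2) (n+2)" using Xc K_carrier by simp
  from transpose_congruence_skew[OF Pc this skew]
  have "transpose_mat (K * (Q * X * P)) = - (K * (Q * X * P))"
    unfolding KQXP .
  then show ?thesis using Pc Q Xc by (simp add: orth_alg_iff)
qed

lemma orth_grp_inverse_K_transpose_K:
  assumes P: "P \<in> orth_grp (n+2) K"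
  shows "K * transpose_mat P * K * P = 1\<^sub>m (n+2)" "P * (K * transpose_mat P * K) = 1\<^sub>m (n+2)"
proof -
  have Pc: "P \<in> carrier_mat (n+2) (n+2)" and PKP: "transpose_mat P * K * P = K"
    using P by (auto simp: orth_grp_def)
  have "K * transpose_mat P * K * P = K * (transpose_mat P * K * P)"
    using Pc by (simp add: assoc_mult_mat_dim)
  also have "\<dots> = 1\<^sub>m (n+2)"
    unfolding PKP by (rule K_involution)
  finally show left: "K * transpose_mat P * K * P = 1\<^sub>m (n+2)" .
  have "K * transpose_mat P * K \<in> carrier_mat (n+2) (n+2)"
    using Pc K_carrier by (meson mult_carrier_mat transpose_carrier_mat)
  from mat_mult_left_right_inverse[OF this Pc left]
  show "P * (K * transpose_mat P * K) = 1\<^sub>m (n+2)" .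
qed

section \<open>The Lie algebra g and the group G\<close>

lemma galg_iff:
  "Z \<in> galg n K \<longleftrightarrow> (\<exists>r X. Z = lie_block n (mat_of_row r) X \<and> r \<in> carrier_vec (n+2) \<and> r $ (n+1) = 0
      \<and> X \<in> orth_alg (n+2) K \<and> X *\<^sub>v elast n = 0\<^sub>v (n+2))" (is "_ \<longleftrightarrow> ?rhs")
proof
  assume "Z \<in> galg n K"
  then obtain X x where Z: "Z = lie_block n (mat_of_row (K *\<^sub>v x)) X" and X: "X \<in> orth_alg (n+2) K"
    "X *\<^sub>v elast n = 0\<^sub>v (n+2)" and x: "x \<in> carrier_vec (n+2)" "(K *\<^sub>v x) \<bullet> elast n = 0"
    by (auto simp: galg_def gvee_mat_def lie_block_def xstar_eq)
  have "(K *\<^sub>v x) $ (n+1) = 0" using x by (simp only: scalar_prod_elast K_mult_vec_carrier)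
  then show ?rhs using Z X x by (intro exI[of _ "K *\<^sub>v x"] exI[of _ X]) simp
next
  assume ?rhs
  then obtain r X where "Z = lie_block n (mat_of_row r) X" "r \<in> carrier_vec (n+2)" "r $ (n+1) = 0"
    "X \<in> orth_alg (n+2) K" "X *\<^sub>v elast n = 0\<^sub>v (n+2)"
    by blast
  then show "Z \<in> galg n K"
    unfolding galg_def gvee_mat_def lie_block_def xstar_eq
    by (intro CollectI exI[of _ X] exI[of _ "K *\<^sub>v r"]) (simp add: K_K_mult_vec scalar_prod_elast)
qed

lemma lie_block_in_galg:
  "r \<in> carrier_vec (n+2) \<Longrightarrow> r $ (n+1) = 0 \<Longrightarrow> X \<in> orth_alg (n+2) K \<Longrightarrow> X *\<^sub>v elast n = 0\<^sub>v (n+2) \<Longrightarrow>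
   lie_block n (mat_of_row r) X \<in> galg n K"
  unfolding galg_iff by blast

lemma galgE:
  assumes "Z \<in> galg n K"
  obtains r X where "Z = lie_block n (mat_of_row r) X" "r \<in> carrier_vec (n+2)" "r $ (n+1) = 0"
    "X \<in> orth_alg (n+2) K" "X *\<^sub>v elast n = 0\<^sub>v (n+2)"
  using assms unfolding galg_iff by blast

lemma galg_carrier: "Z \<in> galg n K \<Longrightarrow> Z \<in> carrier_mat (n+3) (n+3)"
  by (erule galgE) (simp add: orth_alg_carrier)

lemma ggrpE:
  assumes "g \<in> ggrp n K"
  obtains p P where "g = grp_block n (mat_of_row (K *\<^sub>v p)) P" "p \<in> carrier_vec (n+2)" "p $ 0 = 0"
    "P \<in> orth_grp (n+2) K" "P *\<^sub>v elast n = elast n"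
proof -
  obtain P p where g: "g = grp_block n (mat_of_row (xstar K p)) P" and P: "P \<in> orth_grp (n+2) K"
    "P *\<^sub>v elast n = elast n" and p: "p \<in> carrier_vec (n+2)" "xstar K p \<bullet> elast n = 0"
    using assms by (auto simp: ggrp_def grp_block_def)
  show ?thesis
    using that[OF g[unfolded xstar_eq] p(1) _ P] p by (simp add: xstar_scalar_prod_elast)
qed

lemma grp_block_in_ggrp:
  "p \<in> carrier_vec (n+2) \<Longrightarrow> p $ 0 = 0 \<Longrightarrow> P \<in> orth_grp (n+2) K \<Longrightarrow> P *\<^sub>v elast n = elast n \<Longrightarrow>
   grp_block n (mat_of_row (K *\<^sub>v p)) P \<in> ggrp n K"
  unfolding ggrp_def grp_block_def
proof (intro CollectI exI[of _ P] exI[of _ p] conjI)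
  assume "p \<in> carrier_vec (n+2)" "p $ 0 = 0"
  then show "xstar K p \<bullet> elast n = 0" by (simp add: xstar_scalar_prod_elast)
qed (simp_all add: xstar_eq)

lemma galg_add:
  assumes "Z \<in> galg n K" "Z' \<in> galg n K"
  shows "Z + Z' \<in> galg n K"
proof -
  obtain r X where Z: "Z = lie_block n (mat_of_row r) X" "r \<in> carrier_vec (n+2)" "r $ (n+1) = 0"
    "X \<in> orth_alg (n+2) K" "X *\<^sub>v elast n = 0\<^sub>v (n+2)"
    using assms(1) by (rule galgE)
  obtain r' X' where Z': "Z' = lie_block n (mat_of_row r') X'" "r' \<in> carrier_vec (n+2)" "r' $ (n+1) = 0"
    "X' \<in> orth_alg (n+2) K" "X' *\<^sub>v elast n = 0\<^sub>v (n+2)"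
    using assms(2) by (rule galgE)
  have X: "X \<in> carrier_mat (n+2) (n+2)" "X' \<in> carrier_mat (n+2) (n+2)"
    using Z(4) Z'(4) by (auto simp: orth_alg_carrier)
  have "mat_of_row r + mat_of_row r' = mat_of_row (r + r')"
    using Z(2) Z'(2) by (intro eq_matI) auto
  then have "Z + Z' = lie_block n (mat_of_row (r + r')) (X + X')"
    using Z(1,2) Z'(1,2) X by (simp add: lie_block_add)
  moreover have "(X + X') *\<^sub>v elast n = 0\<^sub>v (n+2)"
    using Z(5) Z'(5) X by (simp add: add_mult_distrib_mat_vec)
  ultimately show ?thesis
    using Z Z' by (simp add: lie_block_in_galg orth_alg_add)
qed

lemma galg_smult:
  assumes "Z \<in> galg n K"
  shows "c \<cdot>\<^sub>m Z \<in> galg n K"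
proof -
  obtain r X where Z: "Z = lie_block n (mat_of_row r) X" "r \<in> carrier_vec (n+2)" "r $ (n+1) = 0"
    "X \<in> orth_alg (n+2) K" "X *\<^sub>v elast n = 0\<^sub>v (n+2)"
    using assms by (rule galgE)
  have X: "X \<in> carrier_mat (n+2) (n+2)" using Z(4) by (rule orth_alg_carrier)
  have "c \<cdot>\<^sub>m mat_of_row r = mat_of_row (c \<cdot>\<^sub>v r)"
    using Z(2) by (intro eq_matI) auto
  then have "c \<cdot>\<^sub>m Z = lie_block n (mat_of_row (c \<cdot>\<^sub>v r)) (c \<cdot>\<^sub>m X)"
    using Z(1,2) X by (simp add: lie_block_smult)
  moreover have "(c \<cdot>\<^sub>m X) *\<^sub>v elast n = c \<cdot>\<^sub>v 0\<^sub>v (n+2)"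
    using Z(5) X by (simp add: smult_mat_mult_vec)
  moreover have "c \<cdot>\<^sub>v 0\<^sub>v (n+2) = (0\<^sub>v (n+2) :: real vec)" by (rule eq_vecI) auto
  ultimately show ?thesis
    using Z by (simp add: lie_block_in_galg orth_alg_smult)
qed

lemma zero_in_galg: "0\<^sub>m (n+3) (n+3) \<in> galg n K"
proof -
  have "lie_block n (mat_of_row (0\<^sub>v (n+2))) (0\<^sub>m (n+2) (n+2)) \<in> galg n K"
    by (rule lie_block_in_galg) (auto simp: zero_in_orth_alg)
  moreover have "lie_block n (mat_of_row (0\<^sub>v (n+2))) (0\<^sub>m (n+2) (n+2)) = 0\<^sub>m (n+3) (n+3)"
    by (rule eq_matI) (auto simp: lie_block_def)
  ultimately show ?thesis by simp
qed

lemma mu_linear: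
  assumes Y: "Y \<in> carrier_mat (n+2) (n+2)" and y: "y \<in> carrier_vec (n+2)"
  shows "lin_functional n K (mu n Y y)"
  unfolding lin_functional_def
proof (intro conjI ballI allI)
  fix Z Z' assume Z: "Z \<in> galg n K" and Z': "Z' \<in> galg n K"
  obtain r X where rX: "Z = lie_block n (mat_of_row r) X" "r \<in> carrier_vec (n+2)" "X \<in> orth_alg (n+2) K"
    using Z by (rule galgE)
  obtain r' X' where rX': "Z' = lie_block n (mat_of_row r') X'" "r' \<in> carrier_vec (n+2)" "X' \<in> orth_alg (n+2) K"
    using Z' by (rule galgE)
  have X: "X \<in> carrier_mat (n+2) (n+2)" "X' \<in> carrier_mat (n+2) (n+2)"
    using rX(3) rX'(3) by (auto simp: orth_alg_carrier)
  have "mu n Y y (Z + Z') = 1/2 * mtrace (Y * (X + X')) + (r + r') \<bullet> y"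
    using rX rX' X by (simp add: lie_block_add mu_lie_block)
  also have "mtrace (Y * (X + X')) = mtrace (Y * X) + mtrace (Y * X')"
    using Y X by (simp add: mult_add_distrib_mat mtrace_add[of _ "n+2"])
  also have "(r + r') \<bullet> y = r \<bullet> y + r' \<bullet> y"
    using rX(2) rX'(2) y by (rule add_scalar_prod_distrib)
  finally show "mu n Y y (Z + Z') = mu n Y y Z + mu n Y y Z'"
    using rX rX' X by (simp add: mu_lie_block algebra_simps)
next
  fix c Z assume Z: "Z \<in> galg n K"
  obtain r X where rX: "Z = lie_block n (mat_of_row r) X" "r \<in> carrier_vec (n+2)" "X \<in> orth_alg (n+2) K"
    using Z by (rule galgE)
  have X: "X \<in> carrier_mat (n+2) (n+2)" using rX(3) by (rule orth_alg_carrier)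
  have "mu n Y y (c \<cdot>\<^sub>m Z) = 1/2 * mtrace (c \<cdot>\<^sub>m (Y * X)) + (c \<cdot>\<^sub>v r) \<bullet> y"
    using rX X Y by (simp add: lie_block_smult mu_lie_block mult_smult_distrib)
  then show "mu n Y y (c \<cdot>\<^sub>m Z) = c * mu n Y y Z"
    using rX X Y y by (simp add: mu_lie_block mtrace_smult[of _ "n+2"] algebra_simps)
qed

section \<open>Coadjoint orbits\<close>

lemma mtrace_Lop_elast_mult:
  assumes u: "u \<in> carrier_vec (n+2)" and X: "X \<in> orth_alg (n+2) K" and Xe: "X *\<^sub>v elast n = 0\<^sub>v (n+2)"
  shows "mtrace (Lop K u (elast n) * X) = 0"
proof -
  have "mtrace (Lop K u (elast n) * X) = mtrace (X * Lop K u (elast n))"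
    using u X by (intro mtrace_mult_commute) (auto simp: orth_alg_carrier)
  also have "\<dots> = - 2 * ((K *\<^sub>v u) \<bullet> (X *\<^sub>v elast n))"
    using X u by (simp add: mtrace_mult_Lop)
  finally show ?thesis using Xe u by simp
qed

lemma mu_add_Lop_elast:
  assumes Z: "Z \<in> galg n K" and Y: "Y \<in> carrier_mat (n+2) (n+2)" and u: "u \<in> carrier_vec (n+2)"
  shows "mu n (Y + Lop K u (elast n)) y Z = mu n Y y Z"
proof -
  obtain r X where rX: "Z = lie_block n (mat_of_row r) X" "r \<in> carrier_vec (n+2)"
    "X \<in> orth_alg (n+2) K" "X *\<^sub>v elast n = 0\<^sub>v (n+2)"
    using Z by (rule galgE)
  have X: "X \<in> carrier_mat (n+2) (n+2)" using rX(3) by (rule orth_alg_carrier)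
  have "mtrace ((Y + Lop K u (elast n)) * X) = mtrace (Y * X) + mtrace (Lop K u (elast n) * X)"
    using Y u X by (simp add: add_mult_distrib_mat mtrace_add[of _ "n+2"] mult_mat_carrier_iff)
  also have "mtrace (Lop K u (elast n) * X) = 0"
    using u rX(3,4) by (rule mtrace_Lop_elast_mult)
  finally show ?thesis using rX X by (simp add: mu_lie_block)
qed

lemma mu_add_elast:
  assumes Z: "Z \<in> galg n K" and y: "y \<in> carrier_vec (n+2)"
  shows "mu n Y (y + c \<cdot>\<^sub>v elast n) Z = mu n Y y Z"
proof -
  obtain r X where rX: "Z = lie_block n (mat_of_row r) X" "r \<in> carrier_vec (n+2)" "r $ (n+1) = 0"
    "X \<in> orth_alg (n+2) K"
    using Z by (rule galgE)
  have X: "X \<in> carrier_mat (n+2) (n+2)" using rX(4) by (rule orth_alg_carrier)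
  have "r \<bullet> (y + c \<cdot>\<^sub>v elast n) = r \<bullet> y + c * r $ (n+1)"
    using rX(2) y by (simp add: scalar_prod_add_distrib[of _ "n+2"] scalar_prod_elast)
  then show ?thesis using rX X by (simp add: mu_lie_block)
qed

lemma mu_vanishing_vec:
  assumes W: "W \<in> carrier_mat (n+2) (n+2)" and w: "w \<in> carrier_vec (n+2)"
    and vanish: "\<forall>Z \<in> galg n K. mu n W w Z = 0"
  shows "w = w $ (n+1) \<cdot>\<^sub>v elast n"
proof -
  have "w $ j = 0" if j: "j < n+1" for j
  proof -
    have "lie_block n (mat_of_row (unit_vec (n+2) j)) (0\<^sub>m (n+2) (n+2)) \<in> galg n K"
      using j by (intro lie_block_in_galg) (auto simp: zero_in_orth_alg)
    then have "mu n W w (lie_block n (mat_of_row (unit_vec (n+2) j)) (0\<^sub>m (n+2) (n+2))) = 0"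
      using vanish by blast
    then show ?thesis using W w j by (simp add: mu_lie_block mtrace_def)
  qed
  then show ?thesis using w by (intro eq_vecI) (auto simp: elast_def)
qed

lemma Lop_elast_mult_unit_0:
  assumes W: "W \<in> orth_alg (n+2) K"
  shows "Lop K (W *\<^sub>v unit_vec (n+2) 0) (elast n) *\<^sub>v unit_vec (n+2) 0 = W *\<^sub>v unit_vec (n+2) 0"
proof -
  define u where "u = W *\<^sub>v unit_vec (n+2) 0"
  have u: "u \<in> carrier_vec (n+2)" using orth_alg_carrier[OF W] by (simp add: u_def)
  have "(K *\<^sub>v unit_vec (n+2) 0) \<bullet> u = 0"
    using orth_alg_skew_form[OF W, of "unit_vec (n+2) 0" "unit_vec (n+2) 0"] by (simp add: u_def)
  then have "u $ (n+1) = 0" using u by (simp add: K_unit_0 comm_scalar_prod[of _ "n+2"] scalar_prod_elast)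
  then have "(K *\<^sub>v u) $ 0 = 0" using K_mult_vec_0[OF u] by simp
  then have "Lop K u (elast n) *\<^sub>v unit_vec (n+2) 0 = 1 \<cdot>\<^sub>v u - 0 \<cdot>\<^sub>v elast n"
    using u by (simp add: Lop_mult_vec K_elast)
  also have "\<dots> = u" using u by (intro eq_vecI) (auto simp: elast_def)
  finally show ?thesis unfolding u_def .
qed

lemma orth_alg_eq_0_if_mtrace_vanishes:
  assumes W: "W \<in> orth_alg (n+2) K" and W_e0: "W *\<^sub>v unit_vec (n+2) 0 = 0\<^sub>v (n+2)"
    and vanish: "\<And>X. X \<in> orth_alg (n+2) K \<Longrightarrow> X *\<^sub>v elast n = 0\<^sub>v (n+2) \<Longrightarrow> mtrace (W * X) = 0"
  shows "W = 0\<^sub>m (n+2) (n+2)"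
proof -
  define S where "S = K * W"
  have Wc: "W \<in> carrier_mat (n+2) (n+2)" using W by (rule orth_alg_carrier)
  have S: "S \<in> carrier_mat (n+2) (n+2)" "transpose_mat S = - S"
    using W by (auto simp: S_def orth_alg_iff)
  \<comment> \<open>test against X = S K = K W K, for which tr (W X) = tr (S S) = - |S|^2\<close>
  have "K * (K * S * K) = K * (K * (S * K))"
    using S(1) by (simp add: assoc_mult_mat_dim)
  then have "S * K = K * (K * S * K)"
    using K_K_mult[OF mult_carrier_mat[OF S(1) K_carrier]] by simp
  then have X: "S * K \<in> orth_alg (n+2) K"
    using K_mult_in_orth_alg[of "K * S * K"] K_congruence_skew[OF S] S(1) K_carrier
    by (simp add: mult_mat_carrier_iff)
  have "(S * K) *\<^sub>v elast n = K *\<^sub>v (W *\<^sub>v unit_vec (n+2) 0)"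
    using Wc by (simp add: S_def assoc_mult_mat_dim assoc_mult_mat_vec_dim K_elast)
  then have Xe: "(S * K) *\<^sub>v elast n = 0\<^sub>v (n+2)"
    using W_e0 mult_mat_vec_zero[OF K_carrier] by simp
  have "mtrace (S * S) = mtrace (K * (W * S))"
    using Wc S(1) by (simp add: S_def assoc_mult_mat_dim)
  also have "\<dots> = mtrace ((W * S) * K)"
    using Wc S(1) by (intro mtrace_mult_commute) auto
  also have "\<dots> = mtrace (W * (S * K))"
    using Wc S(1) by (simp add: assoc_mult_mat_dim)
  also have "\<dots> = 0" using X Xe by (rule vanish)
  finally have "S = 0\<^sub>m (n+2) (n+2)" using S by (intro skew_mat_eq_0_if_mtrace_square) auto
  then show ?thesis using K_K_mult[OF Wc] by (simp add: S_def)
qed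

lemma mu_vanishing_mat:
  assumes W: "W \<in> orth_alg (n+2) K" and w: "w \<in> carrier_vec (n+2)"
    and vanish: "\<forall>Z \<in> galg n K. mu n W w Z = 0"
  shows "W = Lop K (W *\<^sub>v unit_vec (n+2) 0) (elast n)"
proof -
  define L where "L = Lop K (W *\<^sub>v unit_vec (n+2) 0) (elast n)"
  have Wc: "W \<in> carrier_mat (n+2) (n+2)" using W by (rule orth_alg_carrier)
  have u: "W *\<^sub>v unit_vec (n+2) 0 \<in> carrier_vec (n+2)" using Wc by simp
  have L: "L \<in> orth_alg (n+2) K" "L \<in> carrier_mat (n+2) (n+2)"
    using u by (simp_all add: L_def Lop_in_orth_alg)
  have "W - L = 0\<^sub>m (n+2) (n+2)"
  proof (rule orth_alg_eq_0_if_mtrace_vanishes)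
    show "W - L \<in> orth_alg (n+2) K" using W L(1) by (rule orth_alg_minus)
    show "(W - L) *\<^sub>v unit_vec (n+2) 0 = 0\<^sub>v (n+2)"
      using Lop_elast_mult_unit_0[OF W] Wc L(2) by (simp add: L_def minus_mult_distrib_mat_vec)
    fix X assume X: "X \<in> orth_alg (n+2) K" "X *\<^sub>v elast n = 0\<^sub>v (n+2)"
    have Xc: "X \<in> carrier_mat (n+2) (n+2)" using X(1) by (rule orth_alg_carrier)
    have "lie_block n (mat_of_row (0\<^sub>v (n+2))) X \<in> galg n K"
      using X by (intro lie_block_in_galg) auto
    then have "mu n W w (lie_block n (mat_of_row (0\<^sub>v (n+2))) X) = 0"
      using vanish by blast
    then have "mtrace (W * X) = 0"
      using Xc w by (simp add: mu_lie_block)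
    moreover have "mtrace (L * X) = 0"
      unfolding L_def using u X by (rule mtrace_Lop_elast_mult)
    ultimately show "mtrace ((W - L) * X) = 0"
      using Wc L(2) Xc by (simp add: minus_mult_distrib_mat mtrace_minus[of _ "n+2"] mult_mat_carrier_iff)
  qed
  then show ?thesis
    using Wc L(2) unfolding L_def by (intro eq_matI) (auto simp: mat_eq_iff)
qed

lemma mu_conj_grp_block:
  assumes P: "P \<in> orth_grp (n+2) K" and Q: "Q \<in> carrier_mat (n+2) (n+2)" and PQ: "P * Q = 1\<^sub>m (n+2)"
    and p: "p \<in> carrier_vec (n+2)" and Y: "Y \<in> carrier_mat (n+2) (n+2)" and y: "y \<in> carrier_vec (n+2)"
    and Z: "Z \<in> galg n K"
  shows "mu n Y y (grp_block n (- mat_of_row (K *\<^sub>v p) * Q) Q * Z * grp_block n (mat_of_row (K *\<^sub>v p)) P)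
    = mu n (P * (Y + Lop K p y) * Q) (P *\<^sub>v y) Z"
proof -
  obtain r X where Z: "Z = lie_block n (mat_of_row r) X" and r: "r \<in> carrier_vec (n+2)"
    and X: "X \<in> orth_alg (n+2) K"
    using Z by (rule galgE)
  have Pc: "P \<in> carrier_mat (n+2) (n+2)" using P by (rule orth_grp_carrier)
  have Xc: "X \<in> carrier_mat (n+2) (n+2)" using X by (rule orth_alg_carrier)
  define M where "M = Q * X * P"
  have M: "M \<in> orth_alg (n+2) K" unfolding M_def using P Q PQ X by (rule orth_alg_conj)
  have Mc: "M \<in> carrier_mat (n+2) (n+2)" using M by (rule orth_alg_carrier)
  have "mtrace (P * (Y + Lop K p y) * Q * X) = mtrace ((Y + Lop K p y) * M)"
    using mtrace_mult_commute[of P "n+2" "n+2" "(Y + Lop K p y) * Q * X"] Pc Y p Q Xc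
    by (simp add: M_def assoc_mult_mat_dim mult_mat_carrier_iff)
  also have "\<dots> = mtrace (Y * M) + mtrace (Lop K p y * M)"
    using Y p Mc by (simp add: add_mult_distrib_mat mtrace_add[of _ "n+2"] mult_mat_carrier_iff)
  also have "mtrace (Lop K p y * M) = - 2 * ((K *\<^sub>v p) \<bullet> (M *\<^sub>v y))"
    using mtrace_mult_commute[of "Lop K p y" "n+2" "n+2" M] mtrace_mult_Lop[OF M p y] p Mc by simp
  finally have "mtrace (P * (Y + Lop K p y) * Q * X) = mtrace (Y * M) - 2 * ((K *\<^sub>v p) \<bullet> (M *\<^sub>v y))"
    by simp
  then show ?thesis
    unfolding Z mu_conj_lie_block[OF K_mult_vec_carrier[OF p] r y Pc Q Xc]
    using Pc Xc r y by (simp add: M_def mu_lie_block)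
qed

lemma special_equiv_imp_same_coadj_orbit:
  assumes Y: "Y \<in> carrier_mat (n+2) (n+2)" and y: "y \<in> carrier_vec (n+2)"
    and Y': "Y' \<in> carrier_mat (n+2) (n+2)"
    and equiv: "special_equiv n K Y y Y' y'"
  shows "same_coadj_orbit n K (mu n Y y) (mu n Y' y')"
proof -
  obtain P Q v p c where P: "P \<in> orth_grp (n+2) K" "P *\<^sub>v elast n = elast n"
    and Q: "Q \<in> carrier_mat (n+2) (n+2)" "P * Q = 1\<^sub>m (n+2)" "Q * P = 1\<^sub>m (n+2)"
    and v: "v \<in> carrier_vec (n+2)" and p: "p \<in> carrier_vec (n+2)" "xstar K p \<bullet> elast n = 0"
    and eqY: "Y' + Lop K v (elast n) = P * (Y + Lop K p y) * Q"
    and eqy: "y' = P *\<^sub>v y + c \<cdot>\<^sub>v elast n"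
    using equiv unfolding special_equiv_def by blast
  have Pc: "P \<in> carrier_mat (n+2) (n+2)" using P(1) by (rule orth_grp_carrier)
  have p0: "p $ 0 = 0" using p by (simp add: xstar_scalar_prod_elast)
  define g where "g = grp_block n (mat_of_row (K *\<^sub>v p)) P"
  define g' where "g' = grp_block n (- mat_of_row (K *\<^sub>v p) * Q) Q"
  have "g \<in> ggrp n K" unfolding g_def using p(1) p0 P by (rule grp_block_in_ggrp)
  moreover have "g' \<in> carrier_mat (n+3) (n+3)" using Q(1) by (simp add: g'_def)
  moreover have "g * g' = 1\<^sub>m (n+3)" "g' * g = 1\<^sub>m (n+3)"
    unfolding g_def g'_def using grp_block_inverse[OF _ Pc Q] p(1) by simp_all
  moreover have "mu n Y' y' Z = mu n Y y (g' * Z * g)" if Z: "Z \<in> galg n K" for Z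
  proof -
    have "mu n Y' y' Z = mu n Y' (P *\<^sub>v y) Z"
      unfolding eqy using Z Pc y by (simp add: mu_add_elast)
    also have "\<dots> = mu n (Y' + Lop K v (elast n)) (P *\<^sub>v y) Z"
      using Z Y' v by (simp add: mu_add_Lop_elast)
    also have "\<dots> = mu n Y y (g' * Z * g)"
      unfolding eqY g_def g'_def using mu_conj_grp_block[OF P(1) Q(1,2) p(1) Y y Z] by simp
    finally show ?thesis .
  qed
  ultimately show ?thesis unfolding same_coadj_orbit_def by blast
qed

lemma special_equiv_if_mu_eq:
  assumes P: "P \<in> orth_grp (n+2) K" "P *\<^sub>v elast n = elast n"
    and Q: "Q \<in> carrier_mat (n+2) (n+2)" "P * Q = 1\<^sub>m (n+2)" "Q * P = 1\<^sub>m (n+2)"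
    and p: "p \<in> carrier_vec (n+2)" "p $ 0 = 0"
    and Y: "Y \<in> orth_alg (n+2) K" and y: "y \<in> carrier_vec (n+2)"
    and Y': "Y' \<in> orth_alg (n+2) K" and y': "y' \<in> carrier_vec (n+2)"
    and eq: "\<forall>Z \<in> galg n K. mu n Y' y' Z = mu n (P * (Y + Lop K p y) * Q) (P *\<^sub>v y) Z"
  shows "special_equiv n K Y y Y' y'"
proof -
  have Pc: "P \<in> carrier_mat (n+2) (n+2)" using P(1) by (rule orth_grp_carrier)
  define M where "M = P * (Y + Lop K p y) * Q"
  have M: "M \<in> orth_alg (n+2) K" unfolding M_def
    using orth_alg_conj[OF orth_grp_inverse[OF P(1) Q(1,2)] Pc Q(3) orth_alg_add[OF Y Lop_in_orth_alg[OF p(1) y]]] .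
  define W where "W = Y' - M"
  define w where "w = y' - P *\<^sub>v y"
  have W: "W \<in> orth_alg (n+2) K" unfolding W_def using Y' M by (rule orth_alg_minus)
  have w: "w \<in> carrier_vec (n+2)" using y' Pc y by (simp add: w_def)
  have vanish: "\<forall>Z \<in> galg n K. mu n W w Z = 0"
    using eq mu_minus[of Y' n M y' "P *\<^sub>v y"] Y' M y' Pc y
    by (simp add: W_def w_def M_def orth_alg_carrier)
  define u where "u = W *\<^sub>v unit_vec (n+2) 0"
  have u: "u \<in> carrier_vec (n+2)" using orth_alg_carrier[OF W] by (simp add: u_def)
  have WL: "W = Lop K u (elast n)" unfolding u_def using W w vanish by (rule mu_vanishing_mat)
  have Y'c: "Y' \<in> carrier_mat (n+2) (n+2)" and Mc: "M \<in> carrier_mat (n+2) (n+2)"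
    using Y' M by (simp_all add: orth_alg_carrier)
  have YM: "Y' + Lop K (- u) (elast n) = M"
  proof (rule eq_matI)
    fix i j assume "i < dim_row M" "j < dim_col M"
    moreover have "W $$ (i,j) = Lop K u (elast n) $$ (i,j)" using WL by simp
    ultimately show "(Y' + Lop K (- u) (elast n)) $$ (i,j) = M $$ (i,j)"
      using Y'c Mc u by (simp add: W_def Lop_uminus)
  qed (use Y'c Mc u in auto)
  define c where "c = w $ (n+1)"
  have wc: "w = c \<cdot>\<^sub>v elast n"
    unfolding c_def by (rule mu_vanishing_vec[OF orth_alg_carrier[OF W] w vanish])
  have "y' = P *\<^sub>v y + w"
    using y' Pc y by (intro eq_vecI) (auto simp: w_def)
  then have y'_eq: "y' = P *\<^sub>v y + c \<cdot>\<^sub>v elast n" unfolding wc .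
  have p_star: "xstar K p \<bullet> elast n = 0" using p by (simp add: xstar_scalar_prod_elast)
  show ?thesis
    unfolding special_equiv_def
    by (rule exI[of _ P], rule exI[of _ Q], rule exI[of _ "- u"], rule exI[of _ p], rule exI[of _ c])
      (use YM[unfolded M_def] y'_eq p_star P Q p(1) u in simp)
qed

lemma same_coadj_orbit_imp_special_equiv:
  assumes Y: "Y \<in> orth_alg (n+2) K" and y: "y \<in> carrier_vec (n+2)"
    and Y': "Y' \<in> orth_alg (n+2) K" and y': "y' \<in> carrier_vec (n+2)"
    and orbit: "same_coadj_orbit n K (mu n Y y) (mu n Y' y')"
  shows "special_equiv n K Y y Y' y'"
proof -
  obtain g g' where g: "g \<in> ggrp n K" and g': "g' \<in> carrier_mat (n+3) (n+3)" "g' * g = 1\<^sub>m (n+3)"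
    and conj: "\<forall>Z \<in> galg n K. mu n Y' y' Z = mu n Y y (g' * Z * g)"
    using orbit unfolding same_coadj_orbit_def by blast
  obtain p P where gP: "g = grp_block n (mat_of_row (K *\<^sub>v p)) P" and p: "p \<in> carrier_vec (n+2)" "p $ 0 = 0"
    and P: "P \<in> orth_grp (n+2) K" "P *\<^sub>v elast n = elast n"
    using g by (rule ggrpE)
  have Pc: "P \<in> carrier_mat (n+2) (n+2)" using P(1) by (rule orth_grp_carrier)
  define Q where "Q = K * transpose_mat P * K"
  have Q: "Q \<in> carrier_mat (n+2) (n+2)" "P * Q = 1\<^sub>m (n+2)" "Q * P = 1\<^sub>m (n+2)"
    using Pc orth_grp_inverse_K_transpose_K[OF P(1)] K_carrier by (auto simp: Q_def mult_mat_carrier_iff)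
  define g'' where "g'' = grp_block n (- mat_of_row (K *\<^sub>v p) * Q) Q"
  have g'': "g'' \<in> carrier_mat (n+3) (n+3)" "g * g'' = 1\<^sub>m (n+3)"
    unfolding gP g''_def using grp_block_inverse[OF _ Pc Q] p(1) Q(1) by simp_all
  have "g' = g''"
    using left_inverse_eq_right_inverse[OF g'(1) _ g''(1) g'(2) g''(2)] Pc by (simp add: gP)
  then have "\<forall>Z \<in> galg n K. mu n Y' y' Z = mu n (P * (Y + Lop K p y) * Q) (P *\<^sub>v y) Z"
    using conj mu_conj_grp_block[OF P(1) Q(1,2) p(1) _ y] Y by (simp add: g''_def gP orth_alg_carrier)
  then show ?thesis by (rule special_equiv_if_mu_eq[OF P Q p Y y Y' y'])
qed

section \<open>Linear functionals on g\<close>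

lemma lin_functional_zero:
  assumes "lin_functional n K f"
  shows "f (0\<^sub>m (n+3) (n+3)) = 0"
proof -
  have "f (0 \<cdot>\<^sub>m 0\<^sub>m (n+3) (n+3)) = 0 * f (0\<^sub>m (n+3) (n+3))"
    using assms zero_in_galg unfolding lin_functional_def by blast
  then show ?thesis by simp
qed

lemma lin_functional_mat_lincomb:
  assumes f: "lin_functional n K f" and A: "finite A" and F: "\<forall>k \<in> A. F k \<in> galg n K"
  shows "mat_lincomb (n+3) (n+3) A c F \<in> galg n K \<and> f (mat_lincomb (n+3) (n+3) A c F) = (\<Sum>k\<in>A. c k * f (F k))"
  using A F
proof (induction A rule: finite_induct)
  case empty
  have "mat_lincomb (n+3) (n+3) {} c F = 0\<^sub>m (n+3) (n+3)" by (rule eq_matI) (auto simp: mat_lincomb_def)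
  then show ?case using zero_in_galg lin_functional_zero[OF f] by simp
next
  case (insert k A)
  then have Fk: "F k \<in> galg n K" and IH: "mat_lincomb (n+3) (n+3) A c F \<in> galg n K"
    "f (mat_lincomb (n+3) (n+3) A c F) = (\<Sum>k\<in>A. c k * f (F k))" by auto
  have "mat_lincomb (n+3) (n+3) (insert k A) c F = c k \<cdot>\<^sub>m F k + mat_lincomb (n+3) (n+3) A c F"
    using insert(1,2) galg_carrier[OF Fk] by (intro eq_matI) (auto simp: mat_lincomb_def)
  moreover have "c k \<cdot>\<^sub>m F k \<in> galg n K" using Fk by (rule galg_smult)
  ultimately show ?case
    using f Fk IH insert(1,2) galg_add unfolding lin_functional_def by auto
qed

lemma galg_row_basis_in_galg: "k < n+1 \<Longrightarrow> galg_row_basis n k \<in> galg n K"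
  unfolding galg_row_basis_def
  by (rule lie_block_in_galg) (auto simp: zero_in_orth_alg intro!: eq_vecI)

lemma skew_unit_mult_elast:
  "a < n+1 \<Longrightarrow> b < n+1 \<Longrightarrow> skew_unit (n+2) a b *\<^sub>v elast n = 0\<^sub>v (n+2)"
  by (rule eq_vecI) (auto simp: skew_unit_def elast_def)

lemma galg_skew_basis_in_galg:
  assumes "a < n+1" "b < n+1"
  shows "galg_skew_basis n K a b \<in> galg n K"
proof -
  have S: "skew_unit (n+2) a b \<in> carrier_mat (n+2) (n+2)" by (simp add: skew_unit_def)
  have "(K * skew_unit (n+2) a b) *\<^sub>v elast n = 0\<^sub>v (n+2)"
    using assms S K_carrier mult_mat_vec_zero[OF K_carrier]
    by (simp add: assoc_mult_mat_vec_dim skew_unit_mult_elast)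
  then show ?thesis
    unfolding galg_skew_basis_def using K_mult_in_orth_alg[OF S skew_unit_skew]
    by (intro lie_block_in_galg) auto
qed

lemma lin_functional_row_part:
  assumes f: "lin_functional n K f" and r: "r \<in> carrier_vec (n+2)" "r $ (n+1) = 0"
  shows "f (lie_block n (mat_of_row r) (0\<^sub>m (n+2) (n+2))) = r \<bullet> row_coeffs n f"
proof -
  have "mat_lincomb (n+3) (n+3) {..<n+1} (\<lambda>k. r $ k) (galg_row_basis n) =
      lie_block n (mat_lincomb 1 (n+2) {..<n+1} (\<lambda>k. r $ k) (\<lambda>k. mat_of_row (unit_vec (n+2) k)))
        (mat_lincomb (n+2) (n+2) {..<n+1} (\<lambda>k. r $ k) (\<lambda>k. 0\<^sub>m (n+2) (n+2)))"
    unfolding galg_row_basis_def by (rule mat_lincomb_lie_block) auto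
  also have "\<dots> = lie_block n (mat_of_row r) (0\<^sub>m (n+2) (n+2))"
    unfolding mat_lincomb_unit_rows[OF r] mat_lincomb_const_zero ..
  finally have eq: "mat_lincomb (n+3) (n+3) {..<n+1} (\<lambda>k. r $ k) (galg_row_basis n) =
      lie_block n (mat_of_row r) (0\<^sub>m (n+2) (n+2))" .
  have "\<forall>k \<in> {..<n+1}. galg_row_basis n k \<in> galg n K" using galg_row_basis_in_galg by auto
  from lin_functional_mat_lincomb[OF f finite_lessThan this, where c = "\<lambda>k. r $ k"]
  have "f (lie_block n (mat_of_row r) (0\<^sub>m (n+2) (n+2))) = (\<Sum>k<n+1. r $ k * f (galg_row_basis n k))"
    unfolding eq by blast
  also have "\<dots> = (\<Sum>k<n+1. r $ k * row_coeffs n f $ k)"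
    by (rule sum.cong) (auto simp: row_coeffs_def)
  also have "\<dots> = r \<bullet> row_coeffs n f"
    using r by (simp add: scalar_prod_def atLeast0LessThan add_2_eq_Suc' row_coeffs_def)
  finally show ?thesis .
qed

lemma lin_functional_skew_part:
  assumes f: "lin_functional n K f" and X: "X \<in> orth_alg (n+2) K" "X *\<^sub>v elast n = 0\<^sub>v (n+2)"
  shows "f (lie_block n (mat_of_row (0\<^sub>v (n+2))) X) =
    (\<Sum>p\<in>{..<n+1} \<times> {..<n+1}. (K * X) $$ p / 2 * f (galg_skew_basis n K (fst p) (snd p)))"
proof -
  let ?I = "{..<n+1} \<times> {..<n+1}"
  define T where "T = K * X"
  have Xc: "X \<in> carrier_mat (n+2) (n+2)" using X(1) by (rule orth_alg_carrier)
  have T: "T \<in> carrier_mat (n+2) (n+2)" "transpose_mat T = - T"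
    using X(1) by (auto simp: T_def orth_alg_iff)
  have T_last_col: "T $$ (i, n+1) = 0" if "i < n+2" for i
  proof -
    have "T *\<^sub>v elast n = 0\<^sub>v (n+2)"
      using X Xc mult_mat_vec_zero[OF K_carrier] by (simp add: T_def assoc_mult_mat_vec_dim)
    then have "(T *\<^sub>v elast n) $ i = 0" using that by simp
    then show ?thesis using that T(1) by (simp add: elast_def)
  qed
  have supp: "T $$ (i,j) = 0" if "i < n+2" "j < n+2" "\<not> (i < n+1 \<and> j < n+1)" for i j
  proof (cases "j = n+1")
    case False
    then have "i = n+1" using that by auto
    then show ?thesis using skew_matD[OF T(2), of j i] T_last_col[of j] T(1) that by simp
  qed (use T_last_col that in simp)
  have "mat_lincomb (n+3) (n+3) ?I (\<lambda>p. T $$ p / 2) (\<lambda>p. galg_skew_basis n K (fst p) (snd p)) =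
      lie_block n (mat_lincomb 1 (n+2) ?I (\<lambda>p. T $$ p / 2) (\<lambda>p. mat_of_row (0\<^sub>v (n+2))))
        (mat_lincomb (n+2) (n+2) ?I (\<lambda>p. T $$ p / 2) (\<lambda>p. K * skew_unit (n+2) (fst p) (snd p)))"
    unfolding galg_skew_basis_def by (rule mat_lincomb_lie_block) (simp add: mult_mat_carrier_iff)
  also have "mat_lincomb 1 (n+2) ?I (\<lambda>p. T $$ p / 2) (\<lambda>p. mat_of_row (0\<^sub>v (n+2))) = mat_of_row (0\<^sub>v (n+2))"
    by (rule eq_matI) (auto simp: mat_lincomb_def)
  also have "mat_lincomb (n+2) (n+2) ?I (\<lambda>p. T $$ p / 2) (\<lambda>p. K * skew_unit (n+2) (fst p) (snd p)) = K * T"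
    using mat_lincomb_mult_left[OF K_carrier, of ?I "\<lambda>p. skew_unit (n+2) (fst p) (snd p)"]
      mat_lincomb_skew_unit[OF T supp]
    by (simp add: carrier_matI)
  also have "K * T = X" using Xc by (simp add: T_def K_K_mult)
  finally have eq: "mat_lincomb (n+3) (n+3) ?I (\<lambda>p. T $$ p / 2) (\<lambda>p. galg_skew_basis n K (fst p) (snd p)) =
      lie_block n (mat_of_row (0\<^sub>v (n+2))) X" .
  have basis: "\<forall>p \<in> ?I. galg_skew_basis n K (fst p) (snd p) \<in> galg n K"
    using galg_skew_basis_in_galg by auto
  have "finite ?I" by simp
  from lin_functional_mat_lincomb[OF f this basis, where c = "\<lambda>p. T $$ p / 2"]
  have "f (mat_lincomb (n+3) (n+3) ?I (\<lambda>p. T $$ p / 2) (\<lambda>p. galg_skew_basis n K (fst p) (snd p))) =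
      (\<Sum>p\<in>?I. T $$ p / 2 * f (galg_skew_basis n K (fst p) (snd p)))" by blast
  then show ?thesis unfolding eq by (simp add: T_def)
qed

lemma lin_functional_skew_basis_swap:
  assumes f: "lin_functional n K f" and ab: "a < n+1" "b < n+1"
  shows "f (galg_skew_basis n K b a) = - f (galg_skew_basis n K a b)"
proof -
  have "skew_unit (n+2) b a = (-1) \<cdot>\<^sub>m skew_unit (n+2) a b"
  proof (rule eq_matI)
    fix i j assume "i < dim_row ((-1) \<cdot>\<^sub>m skew_unit (n+2) a b)" "j < dim_col ((-1) \<cdot>\<^sub>m skew_unit (n+2) a b)"
    then show "skew_unit (n+2) b a $$ (i,j) = ((-1) \<cdot>\<^sub>m skew_unit (n+2) a b) $$ (i,j)"
      by (cases "i = a"; cases "j = b"; cases "i = b"; cases "j = a") (simp_all add: skew_unit_def)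
  qed auto
  moreover have "(-1) \<cdot>\<^sub>m mat_of_row (0\<^sub>v (n+2)) = mat_of_row (0\<^sub>v (n+2) :: real vec)"
    by (rule eq_matI) auto
  ultimately have "galg_skew_basis n K b a = (-1) \<cdot>\<^sub>m galg_skew_basis n K a b"
    unfolding galg_skew_basis_def using K_carrier
    by (simp add: lie_block_smult mult_smult_distrib[OF K_carrier skew_unit_carrier] mult_mat_carrier_iff)
  then show ?thesis
    using f galg_skew_basis_in_galg[OF ab] unfolding lin_functional_def by simp
qed

lemma skew_coeffs_skew:
  assumes f: "lin_functional n K f"
  shows "transpose_mat (skew_coeffs n K f) = - skew_coeffs n K f"
proof (rule skew_matI)
  show "skew_coeffs n K f \<in> carrier_mat (n+2) (n+2)" by (simp add: skew_coeffs_def)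
  fix i j assume ij: "i < n+2" "j < n+2"
  show "skew_coeffs n K f $$ (j,i) = - skew_coeffs n K f $$ (i,j)"
  proof (cases "i < n+1 \<and> j < n+1")
    case True
    then show ?thesis using lin_functional_skew_basis_swap[OF f, of i j] ij by (simp add: skew_coeffs_def)
  qed (use ij in \<open>auto simp: skew_coeffs_def\<close>)
qed

lemma lin_functional_skew_part_mtrace:
  assumes f: "lin_functional n K f" and X: "X \<in> orth_alg (n+2) K" "X *\<^sub>v elast n = 0\<^sub>v (n+2)"
  shows "f (lie_block n (mat_of_row (0\<^sub>v (n+2))) X) = 1/2 * mtrace (skew_coeffs n K f * K * X)"
proof -
  have Xc: "X \<in> carrier_mat (n+2) (n+2)" using X(1) by (rule orth_alg_carrier)
  have "skew_coeffs n K f * K * X = skew_coeffs n K f * (K * X)"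
    using Xc by (simp add: skew_coeffs_def assoc_mult_mat_dim)
  then have "mtrace (skew_coeffs n K f * K * X) =
      (\<Sum>p\<in>{..<n+1} \<times> {..<n+1}. (K * X) $$ p * f (galg_skew_basis n K (fst p) (snd p)))"
    using mtrace_mult_restricted[OF mult_carrier_mat[OF K_carrier Xc], of "n+1"]
    unfolding skew_coeffs_def by simp
  then show ?thesis
    unfolding lin_functional_skew_part[OF f X] by (simp add: sum_divide_distrib)
qed

lemma lin_functional_eq_mu:
  assumes f: "lin_functional n K f"
  shows "\<exists>Y y. Y \<in> orth_alg (n+2) K \<and> y \<in> carrier_vec (n+2) \<and> (\<forall>Z \<in> galg n K. f Z = mu n Y y Z)"
proof -
  have "f Z = mu n (skew_coeffs n K f * K) (row_coeffs n f) Z" if Z: "Z \<in> galg n K" for Z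
  proof -
    obtain r X where rX: "Z = lie_block n (mat_of_row r) X" "r \<in> carrier_vec (n+2)" "r $ (n+1) = 0"
      "X \<in> orth_alg (n+2) K" "X *\<^sub>v elast n = 0\<^sub>v (n+2)"
      using Z by (rule galgE)
    have Xc: "X \<in> carrier_mat (n+2) (n+2)" using rX(4) by (rule orth_alg_carrier)
    define Zr where "Zr = lie_block n (mat_of_row r) (0\<^sub>m (n+2) (n+2))"
    define ZX where "ZX = lie_block n (mat_of_row (0\<^sub>v (n+2))) X"
    have "mat_of_row r + mat_of_row (0\<^sub>v (n+2)) = mat_of_row r" using rX(2) by (intro eq_matI) auto
    then have "Z = Zr + ZX"
      using rX(1,2) Xc by (simp add: Zr_def ZX_def lie_block_add)
    moreover have "0\<^sub>m (n+2) (n+2) *\<^sub>v elast n = 0\<^sub>v (n+2)" by (rule eq_vecI) auto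
    then have "Zr \<in> galg n K"
      unfolding Zr_def by (rule lie_block_in_galg[OF rX(2,3) zero_in_orth_alg])
    moreover have "ZX \<in> galg n K" unfolding ZX_def using rX(4,5) by (intro lie_block_in_galg) auto
    ultimately have "f Z = f Zr + f ZX" using f unfolding lin_functional_def by blast
    also have "\<dots> = r \<bullet> row_coeffs n f + 1/2 * mtrace (skew_coeffs n K f * K * X)"
      unfolding Zr_def ZX_def lin_functional_row_part[OF f rX(2,3)]
        lin_functional_skew_part_mtrace[OF f rX(4,5)] ..
    finally show ?thesis using rX(1,2) Xc by (simp add: mu_lie_block)
  qed
  moreover have "skew_coeffs n K f * K \<in> orth_alg (n+2) K"
    using skew_coeffs_skew[OF f] by (intro mult_K_in_orth_alg) (simp_all add: skew_coeffs_def)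
  moreover have "row_coeffs n f \<in> carrier_vec (n+2)" by (simp add: row_coeffs_def)
  ultimately show ?thesis by blast
qed

end

theorem proposition4:
  fixes n :: nat and Kt :: "real mat"
  assumes "Kt \<in> carrier_mat n n" and "transpose_mat Kt = Kt" and "Kt * Kt = 1\<^sub>m n"
  defines "K \<equiv> Kmat n Kt"
  shows "(\<forall>Y y. Y \<in> orth_alg (n+2) K \<and> y \<in> carrier_vec (n+2) \<longrightarrow> lin_functional n K (mu n Y y))
       \<and> (\<forall>f. lin_functional n K f \<longrightarrow>
            (\<exists>Y y. Y \<in> orth_alg (n+2) K \<and> y \<in> carrier_vec (n+2) \<and> (\<forall>Z \<in> galg n K. f Z = mu n Y y Z)))
       \<and> (\<forall>Y y Y' y'. Y \<in> orth_alg (n+2) K \<and> y \<in> carrier_vec (n+2)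
            \<and> Y' \<in> orth_alg (n+2) K \<and> y' \<in> carrier_vec (n+2) \<longrightarrow>
            (special_equiv n K Y y Y' y' \<longleftrightarrow> same_coadj_orbit n K (mu n Y y) (mu n Y' y')))"
proof -
  interpret galilei_form n K
    unfolding K_def
    by unfold_locales (simp_all add: Kmat_carrier Kmat_symmetric Kmat_involution Kmat_elast assms)
  show ?thesis
  proof (intro conjI allI impI)
    fix Y :: "real mat" and y :: "real vec"
    assume "Y \<in> orth_alg (n+2) K \<and> y \<in> carrier_vec (n+2)"
    then show "lin_functional n K (mu n Y y)" by (simp add: mu_linear orth_alg_carrier)
  next
    fix f :: "real mat \<Rightarrow> real" assume "lin_functional n K f"
    then show "\<exists>Y y. Y \<in> orth_alg (n+2) K \<and> y \<in> carrier_vec (n+2) \<and> (\<forall>Z \<in> galg n K. f Z = mu n Y y Z)"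
      by (rule lin_functional_eq_mu)
  next
    fix Y Y' :: "real mat" and y y' :: "real vec"
    assume "Y \<in> orth_alg (n+2) K \<and> y \<in> carrier_vec (n+2)
      \<and> Y' \<in> orth_alg (n+2) K \<and> y' \<in> carrier_vec (n+2)"
    then show "special_equiv n K Y y Y' y' \<longleftrightarrow> same_coadj_orbit n K (mu n Y y) (mu n Y' y')"
      using special_equiv_imp_same_coadj_orbit same_coadj_orbit_imp_special_equiv orth_alg_carrier by blast
  qed
qed

end
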